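(* Assume $r_0>-\infty$ and $\mathbb E[(\min\{t_1^+,\dots,t_{2d}^+\})^d]<\infty$. Then the restricted path shape functions $g,g^o$ (extended to $\mathcal U$ by radial limits) satisfy the following. (i) $g(0)=r_0$ and $g^o(0)=r_0\wedge0$. (ii) If $r_0\le0$ then $g=g^o$ on all of $\mathcal U$. If $r_0>0$ then $g>g^o$ in an open neighborhood of the origin. (iii) For all $\xi\in\mathbb R^d\setminus\{0\}$ and $\alpha\ge|\xi|_1$, $$\alpha g^o(\xi/\alpha)=\inf_{\tau:\,|\xi|_1\le\tau\le\alpha}\tau g(\xi/\tau),$$ and the infimum on the right is attained at some $\tau\in[|\xi|_1,\alpha]$. In particular, $|\xi|_1=1$ implies $g^o(\xi)=g(\xi)$. (iv) For $\diamond\in\{\text{none},o\}$ (with $g^{\text{none}}=g$), the extended function $g^\diamond$ is convex and lower semicontinuous on $\mathcal U$.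
   Context: Let $d\ge2$. The edge weights $\{t(e)\}$ on the undirected nearest-neighbor edges of $\mathbb Z^d$ are i.i.d. real, and $t_i$ are i.i.d. copies with $t_i^+=t_i\vee0$. Set $r_0=\operatorname{ess\,inf}t(e)$ and $\mathcal U=\{|\xi|_1\le1\}$. Let $G_{0,(n),x}$ (respectively $G^o_{0,(n),x}$) be the minimal passage time over $n$-step paths from $0$ to $x$ with steps in $\{\pm e_i\}$ (respectively in $\{\pm e_i\}\cup\{0\}$, with zero steps of weight $0$). Let $\mathcal D_n$ and $\mathcal D^o_n$ be the corresponding sets of reachable points. $g$ and $g^o$ are the deterministic continuous convex functions on $\{|\xi|_1<1\}$ such that a.s. $n^{-1}G_{0,(k_n),x_n}\to\alpha g(\xi/\alpha)$ and $n^{-1}G^o_{0,(k_n),y_n}\to\alpha g^o(\xi/\alpha)$ whenever $\alpha>|\xi|_1$, $k_n/n\to\alpha$, $x_n\in\mathcal D_{k_n}$, $y_n\in\mathcal D^o_{k_n}$, $x_n/n,y_n/n\to\xi$. For $|\xi|_1=1$, set $g^\diamond(\xi)=\lim_{t\nearrow1}g^\diamond(t\xi)\in(-\infty,\infty]$. *)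

theory Defs
  imports "HOL-Probability.Probability"
begin

text \<open>The undirected nearest-neighbour edge between x and x + e_i
  is encoded as the pair (x, i).
  A zero step (lazy step, weight 0) is None in the option type.\<close>

type_synonym 'd edge = "(int^'d) \<times> 'd"

definition unitv :: "'d::finite \<Rightarrow> int^'d" where
  "unitv i = (\<chi> j. if j = i then 1 else 0)"

definition stepvec :: "'d::finite \<times> bool \<Rightarrow> int^'d" where
  "stepvec s = (if snd s then unitv (fst s) else - unitv (fst s))"

definition step_edge :: "int^'d \<Rightarrow> 'd::finite \<times> bool \<Rightarrow> 'd edge" where
  "step_edge x s = (if snd s then (x, fst s) else (x - unitv (fst s), fst s))"

text \<open>Passage time of the path starting at x and following the steps ss
  (edge weights are summed with multiplicity).\<close>
fun path_weight :: "('d::finite edge \<Rightarrow> real) \<Rightarrow> int^'d \<Rightarrow> ('d \<times> bool) list \<Rightarrow> real" where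
  "path_weight w x [] = 0"
| "path_weight w x (s # ss) = w (step_edge x s) + path_weight w (x + stepvec s) ss"

definition stepvec_o :: "('d::finite \<times> bool) option \<Rightarrow> int^'d" where
  "stepvec_o s = (case s of None \<Rightarrow> 0 | Some s' \<Rightarrow> stepvec s')"

fun path_weight_o :: "('d::finite edge \<Rightarrow> real) \<Rightarrow> int^'d \<Rightarrow> ('d \<times> bool) option list \<Rightarrow> real" where
  "path_weight_o w x [] = 0"
| "path_weight_o w x (s # ss) =
     (case s of None \<Rightarrow> 0 | Some s' \<Rightarrow> w (step_edge x s')) + path_weight_o w (x + stepvec_o s) ss"

definition reach :: "nat \<Rightarrow> (int^'d::finite) set" where
  "reach n = {sum_list (map stepvec ss) | ss. length ss = n}"

definition reach_o :: "nat \<Rightarrow> (int^'d::finite) set" where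
  "reach_o n = {sum_list (map stepvec_o ss) | ss. length ss = n}"

definition Gpp :: "('d::finite edge \<Rightarrow> real) \<Rightarrow> nat \<Rightarrow> int^'d \<Rightarrow> real" where
  "Gpp w n x = Min {path_weight w 0 ss | ss. length ss = n \<and> sum_list (map stepvec ss) = x}"

definition Gpp_o :: "('d::finite edge \<Rightarrow> real) \<Rightarrow> nat \<Rightarrow> int^'d \<Rightarrow> real" where
  "Gpp_o w n x = Min {path_weight_o w 0 ss | ss. length ss = n \<and> sum_list (map stepvec_o ss) = x}"

definition norm1 :: "real^'d::finite \<Rightarrow> real" where
  "norm1 \<xi> = (\<Sum>i\<in>UNIV. \<bar>\<xi> $ i\<bar>)"

definition of_intvec :: "int^'d::finite \<Rightarrow> real^'d" where
  "of_intvec x = (\<chi> i. real_of_int (x $ i))"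

definition radial_ext :: "(real^'d::finite \<Rightarrow> real) \<Rightarrow> real^'d \<Rightarrow> ereal" where
  "radial_ext g \<xi> = (if norm1 \<xi> < 1 then ereal (g \<xi>)
                     else Lim (at_left (1::real)) (\<lambda>s. ereal (g (s *\<^sub>R \<xi>))))"

definition convex_ereal_on :: "(real^'d::finite) set \<Rightarrow> (real^'d \<Rightarrow> ereal) \<Rightarrow> bool" where
  "convex_ereal_on S f \<longleftrightarrow> (\<forall>x\<in>S. \<forall>y\<in>S. \<forall>a::real. 0 < a \<and> a < 1 \<longrightarrow>
      f (a *\<^sub>R x + (1 - a) *\<^sub>R y) \<le> ereal a * f x + ereal (1 - a) * f y)"

definition lsc_ereal_on :: "(real^'d::finite) set \<Rightarrow> (real^'d \<Rightarrow> ereal) \<Rightarrow> bool" where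
  "lsc_ereal_on S f \<longleftrightarrow> (\<forall>x\<in>S. f x \<le> Liminf (at x within S) f)"

definition ess_inf :: "'a measure \<Rightarrow> ('a \<Rightarrow> real) \<Rightarrow> ereal" where
  "ess_inf M X = Sup {ereal c | c. AE \<omega> in M. c \<le> X \<omega>}"

definition origin_edges :: "('d::finite edge) set" where
  "origin_edges = {(0, i) | i. True} \<union> {(- unitv i, i) | i. True}"

end

theory Submission
  imports Defs
begin

(*
  Every step of a path costs at least r0 (a zero step costs 0), which bounds g below by r0
  and go by min r0 0. Almost surely some far-away edge has weight within any epsilon of r0;
  walking there and bouncing on it gives g 0 <= r0. Padding with zero steps gives
  alpha go(xi/alpha) <= tau g(xi/tau) for tau <= alpha, in particular go <= g.

  For the variational formula, strip the zero steps from an optimal lazy path of length about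
  n alpha and pad the result with back-and-forth steps on one edge up to the nearest length
  n tau, with tau on a grid of mesh (alpha - |xi|)/N in [|xi|, alpha]. This costs O(n/N), so
  alpha go(xi/alpha) is the infimum of the perspective tau g(xi/tau) over tau in (|xi|, alpha].
  The infimum is attained, either in the interior by continuity, or at tau = |xi|, where the
  perspective tends to the radial extension; for |xi| = 1 this gives go = g on the sphere.
  If r0 <= 0, the perspective is nonincreasing in tau by convexity along the segment to 0
  (as g 0 = r0 <= 0), hence g <= go. If r0 > 0, then g - go is continuous with value r0 at 0.

  For a convex f on the open l1 ball, the slopes (f (s x) - f 0) / s are nondecreasing in s,
  so the radial extension is the supremum of the continuous functions x |-> f 0 + slope; it is
  therefore lower semicontinuous, and convex as a limit of convex functions.
*)

section \<open>Lattice paths and passage times\<close>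

definition norm1_int :: "int^'d::finite \<Rightarrow> int" where
  "norm1_int x = (\<Sum>i\<in>UNIV. \<bar>x $ i\<bar>)"

lemma norm1_int_nonneg: "0 \<le> norm1_int x"
  by (simp add: norm1_int_def sum_nonneg)

lemma norm1_int_eq_0_iff: "norm1_int x = 0 \<longleftrightarrow> x = 0"
  by (simp add: norm1_int_def sum_nonneg_eq_0_iff vec_eq_iff)

lemma norm1_int_0 [simp]: "norm1_int 0 = 0"
  by (simp add: norm1_int_eq_0_iff)

lemma norm1_int_uminus: "norm1_int (- x) = norm1_int x"
  by (simp add: norm1_int_def)

lemma norm1_int_add_le: "norm1_int (x + y) \<le> norm1_int x + norm1_int y"
  unfolding norm1_int_def by (simp add: sum.distrib[symmetric] sum_mono abs_triangle_ineq)

lemma even_norm1_int_add: "even (norm1_int x + norm1_int y - norm1_int (x + y))"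
proof -
  have abs_parity: "even (\<bar>a\<bar> - a)" for a :: int
    by (cases "0 \<le> a") auto
  have "even (\<bar>x $ i\<bar> + \<bar>y $ i\<bar> - \<bar>x $ i + y $ i\<bar>)" for i
    using abs_parity[of "x $ i"] abs_parity[of "y $ i"] abs_parity[of "x $ i + y $ i"]
    by presburger
  moreover have "norm1_int x + norm1_int y - norm1_int (x + y) =
      (\<Sum>i\<in>UNIV. \<bar>x $ i\<bar> + \<bar>y $ i\<bar> - \<bar>x $ i + y $ i\<bar>)"
    by (simp add: norm1_int_def sum.distrib sum_subtractf)
  ultimately show ?thesis
    by (simp add: dvd_sum)
qed

lemma norm1_int_stepvec: "norm1_int (stepvec s) = 1"
proof -
  have "\<bar>stepvec s $ j\<bar> = (if j = fst s then 1 else 0)" for j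
    by (simp add: stepvec_def unitv_def)
  then show ?thesis
    by (simp add: norm1_int_def)
qed

lemma norm1_int_diff_stepvec:
  assumes "x $ i \<noteq> 0"
  shows "norm1_int (x - stepvec (i, 0 < x $ i)) = norm1_int x - 1"
proof -
  have "\<bar>(x - stepvec (i, 0 < x $ i)) $ j\<bar> = \<bar>x $ j\<bar> - (if j = i then 1 else 0)" for j
    using assms by (auto simp: stepvec_def unitv_def)
  then show ?thesis
    by (simp add: norm1_int_def sum_subtractf)
qed

lemma reach_0: "reach 0 = {0}"
  by (simp add: reach_def)

lemma reach_Suc: "reach (Suc k) = {stepvec s + y | s y. y \<in> reach k}"
proof (intro set_eqI iffI)
  fix x
  assume "x \<in> reach (Suc k)"
  then show "x \<in> {stepvec s + y | s y. y \<in> reach k}"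
    by (force simp: reach_def length_Suc_conv)
next
  fix x
  assume "x \<in> {stepvec s + y | s y. y \<in> reach k}"
  then obtain s ss where "x = stepvec s + sum_list (map stepvec ss)" "length ss = k"
    by (auto simp: reach_def)
  then show "x \<in> reach (Suc k)"
    unfolding reach_def by (intro CollectI exI[of _ "s # ss"]) simp
qed

lemma exists_step_toward:
  assumes x: "norm1_int x \<le> int (Suc k)" "even (int (Suc k) - norm1_int x)"
  shows "\<exists>s. norm1_int (x - stepvec s) \<le> int k \<and> even (int k - norm1_int (x - stepvec s))"
proof (cases "x = 0")
  case True
  then have "odd k"
    using x by simp
  then have "1 \<le> int k"
    by (cases k) auto
  then show ?thesis
    using True \<open>odd k\<close> by (intro exI[of _ "(undefined, True)"]) (simp add: norm1_int_uminus norm1_int_stepvec)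
next
  case False
  then obtain i where "x $ i \<noteq> 0"
    by (auto simp: vec_eq_iff)
  then show ?thesis
    using x by (intro exI[of _ "(i, 0 < x $ i)"]) (auto simp: norm1_int_diff_stepvec)
qed

lemma reach_iff: "x \<in> reach k \<longleftrightarrow> norm1_int x \<le> int k \<and> even (int k - norm1_int x)"
proof (induction k arbitrary: x)
  case 0
  then show ?case
    using norm1_int_nonneg[of x] by (auto simp: reach_0 norm1_int_eq_0_iff)
next
  case (Suc k)
  show ?case
  proof
    assume "x \<in> reach (Suc k)"
    then obtain s y where x: "x = stepvec s + y" and y: "y \<in> reach k"
      by (auto simp: reach_Suc)
    have "norm1_int x \<le> 1 + norm1_int y" "even (1 + norm1_int y - norm1_int x)"
      using norm1_int_add_le[of "stepvec s" y] even_norm1_int_add[of "stepvec s" y]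
      by (simp_all add: x norm1_int_stepvec)
    moreover have "int (Suc k) - norm1_int x = (int k - norm1_int y) + (1 + norm1_int y - norm1_int x)"
      by simp
    ultimately show "norm1_int x \<le> int (Suc k) \<and> even (int (Suc k) - norm1_int x)"
      using Suc.IH[of y] y by simp
  next
    assume "norm1_int x \<le> int (Suc k) \<and> even (int (Suc k) - norm1_int x)"
    then obtain s where "norm1_int (x - stepvec s) \<le> int k \<and> even (int k - norm1_int (x - stepvec s))"
      using exists_step_toward by blast
    then have "x - stepvec s \<in> reach k"
      using Suc.IH by blast
    then show "x \<in> reach (Suc k)"
      unfolding reach_Suc by (intro CollectI exI[of _ s] exI[of _ "x - stepvec s"]) simp
  qed
qed

lemma path_weight_append:
  "path_weight w x (ss @ tt) = path_weight w x ss + path_weight w (x + sum_list (map stepvec ss)) tt"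
  by (induction ss arbitrary: x) (auto simp: add.assoc)

definition bounce :: "'d \<Rightarrow> nat \<Rightarrow> ('d \<times> bool) list" where
  "bounce i j = concat (replicate j [(i, True), (i, False)])"

lemma length_bounce: "length (bounce i j) = 2 * j"
  by (induction j) (auto simp: bounce_def)

lemma stepvec_back_forth: "stepvec (i, True) + stepvec (i, False) = 0"
  by (simp add: stepvec_def)

lemma sum_bounce: "sum_list (map stepvec (bounce i j)) = 0"
  by (induction j) (auto simp: bounce_def stepvec_back_forth)

lemma path_weight_bounce: "path_weight w x (bounce i j) = 2 * real j * w (x, i)"
proof (induction j)
  case 0
  then show ?case
    by (simp add: bounce_def)
next
  case (Suc j)
  have "bounce i (Suc j) = [(i, True), (i, False)] @ bounce i j"
    by (simp add: bounce_def)
  then show ?case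
    using Suc by (simp add: path_weight_append stepvec_back_forth step_edge_def stepvec_def algebra_simps)
qed

lemma finite_path_image: "finite {f ss | ss. length ss = n \<and> P ss}"
  for f :: "'a::finite list \<Rightarrow> 'b"
proof -
  have "finite {ss :: 'a list. set ss \<subseteq> UNIV \<and> length ss = n}"
    by (rule finite_lists_length_eq) simp
  then have "finite (f ` {ss. set ss \<subseteq> UNIV \<and> length ss = n})"
    by simp
  then show ?thesis
    by (rule rev_finite_subset) auto
qed

lemma Gpp_le: "length ss = n \<Longrightarrow> sum_list (map stepvec ss) = x \<Longrightarrow> Gpp w n x \<le> path_weight w 0 ss"
  unfolding Gpp_def by (rule Min_le[OF finite_path_image]) blast

lemma Gpp_o_le: "length ss = n \<Longrightarrow> sum_list (map stepvec_o ss) = x \<Longrightarrow> Gpp_o w n x \<le> path_weight_o w 0 ss"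
  unfolding Gpp_o_def by (rule Min_le[OF finite_path_image]) blast

lemma obtain_Gpp_path:
  assumes "x \<in> reach n"
  obtains ss where "length ss = n" "sum_list (map stepvec ss) = x" "Gpp w n x = path_weight w 0 ss"
proof -
  have "Gpp w n x \<in> {path_weight w 0 ss | ss. length ss = n \<and> sum_list (map stepvec ss) = x}"
    unfolding Gpp_def using assms by (intro Min_in[OF finite_path_image]) (auto simp: reach_def)
  then show ?thesis
    using that by blast
qed

lemma obtain_Gpp_o_path:
  assumes "x \<in> reach_o n"
  obtains ss where "length ss = n" "sum_list (map stepvec_o ss) = x" "Gpp_o w n x = path_weight_o w 0 ss"
proof -
  have "Gpp_o w n x \<in> {path_weight_o w 0 ss | ss. length ss = n \<and> sum_list (map stepvec_o ss) = x}"
    unfolding Gpp_o_def using assms by (intro Min_in[OF finite_path_image]) (auto simp: reach_o_def)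
  then show ?thesis
    using that by blast
qed

lemma path_weight_ge: "(\<And>e. r \<le> w e) \<Longrightarrow> real (length ss) * r \<le> path_weight w x ss"
  by (induction ss arbitrary: x) (auto simp: algebra_simps add_mono)

lemma path_weight_o_ge: "(\<And>e. r \<le> w e) \<Longrightarrow> real (length ss) * min r 0 \<le> path_weight_o w x ss"
proof (induction ss arbitrary: x)
  case (Cons s ss)
  have "min r 0 \<le> (case s of None \<Rightarrow> 0 | Some s' \<Rightarrow> w (step_edge x s'))"
    using Cons.prems by (cases s) (auto simp: min_le_iff_disj)
  from add_mono[OF this Cons.IH[OF Cons.prems]] show ?case
    by (simp add: algebra_simps)
qed simp

lemma Gpp_ge: "(\<And>e. r \<le> w e) \<Longrightarrow> x \<in> reach n \<Longrightarrow> real n * r \<le> Gpp w n x"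
  by (metis obtain_Gpp_path path_weight_ge)

lemma Gpp_o_ge: "(\<And>e. r \<le> w e) \<Longrightarrow> x \<in> reach_o n \<Longrightarrow> real n * min r 0 \<le> Gpp_o w n x"
  by (metis obtain_Gpp_o_path path_weight_o_ge)

lemma Gpp_closed_loop:
  assumes "sum_list (map stepvec l) = 0" "x \<in> reach m"
  shows "Gpp w (length l + m) x \<le> path_weight w 0 l + Gpp w m x"
proof -
  obtain ss where ss: "length ss = m" "sum_list (map stepvec ss) = x" "Gpp w m x = path_weight w 0 ss"
    using obtain_Gpp_path[OF assms(2)] .
  have "Gpp w (length l + m) x \<le> path_weight w 0 (l @ ss)"
    by (rule Gpp_le) (use ss assms in auto)
  also have "\<dots> = path_weight w 0 l + Gpp w m x"
    by (simp add: path_weight_append assms ss)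
  finally show ?thesis .
qed

lemma Gpp_origin_loop_via_edge: "\<exists>L C. \<forall>j. Gpp w (2 * L + 2 * j) 0 \<le> C + 2 * real j * w (z, i)"
proof -
  obtain p where p: "sum_list (map stepvec p) = z" "length p = nat (norm1_int z)"
    using reach_iff[of z "nat (norm1_int z)"] by (auto simp: reach_def norm1_int_nonneg)
  obtain q where q: "sum_list (map stepvec q) = - z" "length q = nat (norm1_int z)"
    using reach_iff[of "- z" "nat (norm1_int z)"] by (auto simp: reach_def norm1_int_nonneg norm1_int_uminus)
  have "Gpp w (2 * nat (norm1_int z) + 2 * j) 0 \<le> path_weight w 0 (p @ bounce i j @ q)" for j
    by (rule Gpp_le) (simp_all add: length_bounce sum_bounce p q)
  also have "path_weight w 0 (p @ bounce i j @ q) =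
      (path_weight w 0 p + path_weight w z q) + 2 * real j * w (z, i)" for j
    by (simp add: path_weight_append sum_bounce path_weight_bounce p)
  finally show ?thesis
    by blast
qed

fun strip_lazy :: "'a option list \<Rightarrow> 'a list" where
  "strip_lazy [] = []"
| "strip_lazy (None # ss) = strip_lazy ss"
| "strip_lazy (Some s # ss) = s # strip_lazy ss"

lemma length_strip_lazy_le: "length (strip_lazy ss) \<le> length ss"
  by (induction ss rule: strip_lazy.induct) auto

lemma sum_strip_lazy: "sum_list (map stepvec_o ss) = sum_list (map stepvec (strip_lazy ss))"
  by (induction ss rule: strip_lazy.induct) (auto simp: stepvec_o_def)

lemma path_weight_o_strip_lazy: "path_weight_o w x ss = path_weight w x (strip_lazy ss)"
  by (induction ss arbitrary: x rule: strip_lazy.induct) (auto simp: stepvec_o_def)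

lemma strip_lazy_pad: "strip_lazy (map Some ss @ replicate j None) = ss"
proof -
  have "strip_lazy (replicate j None) = []"
    by (induction j) auto
  then show ?thesis
    by (induction ss) auto
qed

lemma sum_stepvec_o_pad: "sum_list (map stepvec_o (map Some ss @ replicate j None)) = sum_list (map stepvec ss)"
  by (simp only: sum_strip_lazy strip_lazy_pad)

lemma reach_subset_reach_o: "j \<le> k \<Longrightarrow> reach j \<subseteq> reach_o k"
proof
  fix x
  assume "j \<le> k" "x \<in> reach j"
  then obtain ss where "length ss = j" "x = sum_list (map stepvec ss)"
    by (auto simp: reach_def)
  then show "x \<in> reach_o k"
    unfolding reach_o_def using \<open>j \<le> k\<close>
    by (intro CollectI exI[of _ "map Some ss @ replicate (k - j) None"])
       (simp add: sum_stepvec_o_pad del: map_append)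
qed

lemma Gpp_o_le_Gpp:
  assumes "x \<in> reach j" "j \<le> k"
  shows "Gpp_o w k x \<le> Gpp w j x"
proof -
  obtain ss where ss: "length ss = j" "sum_list (map stepvec ss) = x" "Gpp w j x = path_weight w 0 ss"
    using obtain_Gpp_path[OF assms(1)] .
  have "Gpp_o w k x \<le> path_weight_o w 0 (map Some ss @ replicate (k - j) None)"
    by (rule Gpp_o_le) (use ss assms(2) in \<open>simp_all add: sum_stepvec_o_pad del: map_append\<close>)
  also have "\<dots> = Gpp w j x"
    by (simp add: path_weight_o_strip_lazy strip_lazy_pad ss)
  finally show ?thesis .
qed

lemma Gpp_le_Gpp_o:
  assumes "x \<in> reach_o k"
  obtains m where "m \<le> k" "x \<in> reach m" "Gpp w m x \<le> Gpp_o w k x"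
proof -
  obtain ss where ss: "length ss = k" "sum_list (map stepvec_o ss) = x" "Gpp_o w k x = path_weight_o w 0 ss"
    using obtain_Gpp_o_path[OF assms] .
  have "Gpp w (length (strip_lazy ss)) x \<le> path_weight w 0 (strip_lazy ss)"
    by (rule Gpp_le) (use ss in \<open>simp_all add: sum_strip_lazy\<close>)
  also have "\<dots> = Gpp_o w k x"
    using ss by (simp add: path_weight_o_strip_lazy)
  finally show ?thesis
    using that[of "length (strip_lazy ss)"] ss length_strip_lazy_le[of ss]
    by (auto simp: reach_def sum_strip_lazy)
qed

section \<open>Radial extension of convex functions on the l1 ball\<close>

abbreviation ball1 :: "(real^'d::finite) set" where
  "ball1 \<equiv> {\<xi>. norm1 \<xi> < 1}"

abbreviation cball1 :: "(real^'d::finite) set" where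
  "cball1 \<equiv> {\<xi>. norm1 \<xi> \<le> 1}"

lemma norm1_nonneg: "0 \<le> norm1 v"
  by (simp add: norm1_def sum_nonneg)

lemma norm1_0 [simp]: "norm1 0 = 0"
  by (simp add: norm1_def)

lemma norm1_pos:
  assumes "v \<noteq> 0"
  shows "0 < norm1 v"
proof -
  obtain i where "v $ i \<noteq> 0"
    using assms by (auto simp: vec_eq_iff)
  then have "0 < \<bar>v $ i\<bar>"
    by simp
  also have "\<bar>v $ i\<bar> \<le> norm1 v"
    unfolding norm1_def by (rule member_le_sum) auto
  finally show ?thesis .
qed

lemma norm1_scaleR: "norm1 (c *\<^sub>R v) = \<bar>c\<bar> * norm1 v"
  by (simp add: norm1_def abs_mult sum_distrib_left)

lemma norm1_add_le: "norm1 (x + y) \<le> norm1 x + norm1 y"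
  unfolding norm1_def by (simp add: sum.distrib[symmetric] sum_mono abs_triangle_ineq)

lemma norm_le_norm1: "norm v \<le> norm1 v"
  unfolding norm1_def by (rule norm_le_l1_cart)

lemma continuous_on_norm1: "continuous_on S norm1"
  unfolding norm1_def by (intro continuous_intros)

lemma open_ball1: "open ball1"
  by (rule open_Collect_less) (auto intro: continuous_on_norm1)

lemma convex_cball1: "convex cball1"
proof (rule convexI)
  fix x y :: "real^'d" and u v :: real
  assume xy: "x \<in> cball1" "y \<in> cball1" and uv: "0 \<le> u" "0 \<le> v" "u + v = 1"
  have "norm1 (u *\<^sub>R x + v *\<^sub>R y) \<le> u * norm1 x + v * norm1 y"
    using norm1_add_le[of "u *\<^sub>R x" "v *\<^sub>R y"] uv by (simp add: norm1_scaleR)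
  also have "\<dots> \<le> u * 1 + v * 1"
    using xy uv by (intro add_mono mult_left_mono) auto
  finally show "u *\<^sub>R x + v *\<^sub>R y \<in> cball1"
    using uv by simp
qed

lemma scaleR_in_ball1:
  assumes "x \<in> cball1" "\<bar>s\<bar> < 1"
  shows "s *\<^sub>R x \<in> ball1"
proof -
  have "\<bar>s\<bar> * norm1 x \<le> \<bar>s\<bar> * 1"
    using assms by (intro mult_left_mono) auto
  then show ?thesis
    using assms by (simp add: norm1_scaleR)
qed

lemma scaleR_inverse_in_ball1: "norm1 \<xi> < \<tau> \<Longrightarrow> (1 / \<tau>) *\<^sub>R \<xi> \<in> ball1"
  using norm1_nonneg[of \<xi>] by (simp add: norm1_scaleR divide_less_eq)

lemma radial_ext_ball1: "x \<in> ball1 \<Longrightarrow> radial_ext f x = ereal (f x)"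
  by (simp add: radial_ext_def)

lemma radial_ext_cong:
  assumes "\<And>y. y \<in> ball1 \<Longrightarrow> f y = f' y" "x \<in> cball1"
  shows "radial_ext f x = radial_ext f' x"
proof -
  have "\<forall>\<^sub>F s in at_left 1. ereal (f (s *\<^sub>R x)) = ereal (f' (s *\<^sub>R x))"
  proof (rule eventually_at_left_1)
    fix s :: real
    assume "0 < s" "s < 1"
    then have "s *\<^sub>R x \<in> ball1"
      using assms(2) by (intro scaleR_in_ball1) auto
    then show "ereal (f (s *\<^sub>R x)) = ereal (f' (s *\<^sub>R x))"
      using assms(1) by simp
  qed
  then have "Lim (at_left 1) (\<lambda>s. ereal (f (s *\<^sub>R x))) = Lim (at_left 1) (\<lambda>s. ereal (f' (s *\<^sub>R x)))"
    by (rule Lim_cong[OF _ refl])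
  then show ?thesis
    using assms by (simp add: radial_ext_def)
qed

definition radial_slope :: "(real^'d::finite \<Rightarrow> real) \<Rightarrow> real^'d \<Rightarrow> real \<Rightarrow> real" where
  "radial_slope f x s = (f (s *\<^sub>R x) - f 0) / s"

locale convex_on_ball1 =
  fixes f :: "real^'d::finite \<Rightarrow> real"
  assumes convex: "convex_on ball1 f"
begin

lemma continuous_on: "continuous_on ball1 f"
  by (rule convex_on_continuous[OF open_ball1 convex])

lemma isCont: "x \<in> ball1 \<Longrightarrow> isCont f x"
  using continuous_on open_ball1 continuous_on_eq_continuous_at by blast

lemma radial_slope_mono:
  assumes x: "x \<in> cball1" and s: "0 < s" "s \<le> s'" "s' < 1"
  shows "radial_slope f x s \<le> radial_slope f x s'"
proof -
  have "s *\<^sub>R x = (1 - (1 - s / s')) *\<^sub>R (s' *\<^sub>R x) + (1 - s / s') *\<^sub>R 0"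
    using s by simp
  then have "f (s *\<^sub>R x) \<le> (1 - (1 - s / s')) * f (s' *\<^sub>R x) + (1 - s / s') * f 0"
    using convex_onD[OF convex, of "1 - s / s'" "s' *\<^sub>R x" 0] scaleR_in_ball1[OF x, of s'] s
    by simp
  then have "f (s *\<^sub>R x) - f 0 \<le> (s / s') * (f (s' *\<^sub>R x) - f 0)"
    by (simp add: algebra_simps)
  also have "\<dots> = ((f (s' *\<^sub>R x) - f 0) / s') * s"
    by simp
  finally have "f (s *\<^sub>R x) - f 0 \<le> ((f (s' *\<^sub>R x) - f 0) / s') * s" .
  then show ?thesis
    using s by (simp add: radial_slope_def pos_divide_le_eq)
qed

lemma radial_slope_tendsto:
  assumes x: "x \<in> cball1"
  shows "((\<lambda>s. ereal (radial_slope f x s)) \<longlongrightarrow> (SUP s\<in>{0<..<1}. ereal (radial_slope f x s))) (at_left 1)"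
proof (rule order_tendstoI)
  fix y
  assume "y < (SUP s\<in>{0<..<1}. ereal (radial_slope f x s))"
  then obtain s0 where s0: "s0 \<in> {0<..<1}" "y < ereal (radial_slope f x s0)"
    by (auto simp: less_SUP_iff)
  have "\<forall>\<^sub>F s in at_left 1. s \<in> {s0<..<1}"
    using s0 by (intro eventually_at_left_real) auto
  then show "\<forall>\<^sub>F s in at_left 1. y < ereal (radial_slope f x s)"
  proof eventually_elim
    case (elim s)
    then have "ereal (radial_slope f x s0) \<le> ereal (radial_slope f x s)"
      using radial_slope_mono[OF x, of s0 s] s0 by simp
    with s0(2) show ?case
      by (rule less_le_trans)
  qed
next
  fix y
  assume y: "(SUP s\<in>{0<..<1}. ereal (radial_slope f x s)) < y"
  show "\<forall>\<^sub>F s in at_left 1. ereal (radial_slope f x s) < y"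
  proof (rule eventually_at_left_1)
    fix s :: real
    assume "0 < s" "s < 1"
    then have "ereal (radial_slope f x s) \<le> (SUP s\<in>{0<..<1}. ereal (radial_slope f x s))"
      by (intro SUP_upper) auto
    then show "ereal (radial_slope f x s) < y"
      using y by (rule le_less_trans)
  qed
qed

lemma radial_tendsto_slope_SUP:
  assumes x: "x \<in> cball1"
  shows "((\<lambda>s. ereal (f (s *\<^sub>R x))) \<longlongrightarrow> ereal (f 0) + (SUP s\<in>{0<..<1}. ereal (radial_slope f x s))) (at_left 1)"
proof -
  let ?S = "SUP s\<in>{0<..<1}. ereal (radial_slope f x s)"
  have "((\<lambda>s. ereal s * ereal (radial_slope f x s)) \<longlongrightarrow> ereal 1 * ?S) (at_left 1)"
    by (intro tendsto_mult_ereal tendsto_intros radial_slope_tendsto[OF x]) auto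
  then have "((\<lambda>s. ereal (f 0) + ereal s * ereal (radial_slope f x s)) \<longlongrightarrow> ereal (f 0) + ?S) (at_left 1)"
    unfolding one_ereal_def[symmetric] mult_1 by (intro tendsto_add_ereal_general2) auto
  moreover have "\<forall>\<^sub>F s in at_left 1. ereal (f 0) + ereal s * ereal (radial_slope f x s) = ereal (f (s *\<^sub>R x))"
    by (intro eventually_at_left_1) (simp add: radial_slope_def)
  ultimately show ?thesis
    by (rule Lim_transform_eventually)
qed

lemma radial_ext_eq_slope_SUP:
  assumes x: "x \<in> cball1"
  shows "radial_ext f x = ereal (f 0) + (SUP s\<in>{0<..<1}. ereal (radial_slope f x s))"
proof (cases "x \<in> ball1")
  case True
  have "((\<lambda>s. f (s *\<^sub>R x)) \<longlongrightarrow> f (1 *\<^sub>R x)) (at_left 1)"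
    using isCont[OF True] by (intro isCont_tendsto_compose[of _ f] tendsto_intros) auto
  then have "((\<lambda>s. ereal (f (s *\<^sub>R x))) \<longlongrightarrow> ereal (f x)) (at_left 1)"
    by (simp add: tendsto_ereal)
  then show ?thesis
    using True tendsto_unique[OF trivial_limit_at_left_real _ radial_tendsto_slope_SUP[OF x]]
    by (simp add: radial_ext_ball1)
next
  case False
  then show ?thesis
    using tendsto_Lim[OF trivial_limit_at_left_real radial_tendsto_slope_SUP[OF x]]
    by (simp add: radial_ext_def)
qed

lemma radial_ext_tendsto: "x \<in> cball1 \<Longrightarrow> ((\<lambda>s. ereal (f (s *\<^sub>R x))) \<longlongrightarrow> radial_ext f x) (at_left 1)"
  using radial_tendsto_slope_SUP radial_ext_eq_slope_SUP by simp

lemma radial_slope_le_radial_ext: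
  assumes "x \<in> cball1" "s \<in> {0<..<1}"
  shows "ereal (f 0 + radial_slope f x s) \<le> radial_ext f x"
proof -
  have "ereal (radial_slope f x s) \<le> (SUP s\<in>{0<..<1}. ereal (radial_slope f x s))"
    using assms(2) by (rule SUP_upper)
  from add_left_mono[OF this, of "ereal (f 0)"] show ?thesis
    by (simp add: radial_ext_eq_slope_SUP[OF assms(1)])
qed

lemma radial_ext_gt_MInf:
  assumes "x \<in> cball1"
  shows "- \<infinity> < radial_ext f x"
proof -
  have "ereal (f 0 + radial_slope f x (1 / 2)) \<le> radial_ext f x"
    using assms by (intro radial_slope_le_radial_ext) auto
  then show ?thesis
    by (rule less_le_trans[rotated]) simp
qed

lemma radial_limit_exists: "x \<in> cball1 \<Longrightarrow> \<exists>L. ((\<lambda>s. ereal (f (s *\<^sub>R x))) \<longlongrightarrow> L) (at_left 1) \<and> - \<infinity> < L"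
  using radial_ext_tendsto radial_ext_gt_MInf by blast

lemma less_radial_ext_slope:
  assumes x: "x \<in> cball1" and y: "y < radial_ext f x"
  shows "\<exists>s\<in>{0<..<1}. y < ereal (f 0 + radial_slope f x s)"
proof -
  have "radial_ext f x = (SUP s\<in>{0<..<1}. ereal (f 0) + ereal (radial_slope f x s))"
    unfolding radial_ext_eq_slope_SUP[OF x] by (rule SUP_ereal_add_right[symmetric]) auto
  then show ?thesis
    using y by (simp add: less_SUP_iff)
qed

lemma convex_radial_ext: "convex_ereal_on cball1 (radial_ext f)"
  unfolding convex_ereal_on_def
proof (intro ballI allI impI)
  fix x y :: "real^'d" and a :: real
  assume x: "x \<in> cball1" and y: "y \<in> cball1" and a: "0 < a \<and> a < 1"
  let ?z = "a *\<^sub>R x + (1 - a) *\<^sub>R y"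
  have z: "?z \<in> cball1"
    using convexD[OF convex_cball1 x y, of a "1 - a"] a by simp
  have finite_below: "- \<infinity> < ereal c * radial_ext f v" if "0 < c" "v \<in> cball1" for c v
    using radial_ext_gt_MInf[OF that(2)] that(1) by (cases "radial_ext f v") auto
  have lim: "((\<lambda>s. ereal a * ereal (f (s *\<^sub>R x)) + ereal (1 - a) * ereal (f (s *\<^sub>R y))) \<longlongrightarrow>
      ereal a * radial_ext f x + ereal (1 - a) * radial_ext f y) (at_left 1)"
    using finite_below[OF _ x, of a] finite_below[OF _ y, of "1 - a"] a
    by (intro tendsto_add_ereal_general tendsto_cmult_ereal radial_ext_tendsto x y) auto
  have "\<forall>\<^sub>F s in at_left 1. ereal (f (s *\<^sub>R ?z)) \<le> ereal a * ereal (f (s *\<^sub>R x)) + ereal (1 - a) * ereal (f (s *\<^sub>R y))"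
  proof (rule eventually_at_left_1)
    fix s :: real
    assume "0 < s" "s < 1"
    then have "s *\<^sub>R x \<in> ball1" "s *\<^sub>R y \<in> ball1"
      using scaleR_in_ball1[OF x, of s] scaleR_in_ball1[OF y, of s] by auto
    moreover have "s *\<^sub>R ?z = (1 - (1 - a)) *\<^sub>R (s *\<^sub>R x) + (1 - a) *\<^sub>R (s *\<^sub>R y)"
      by (simp add: algebra_simps)
    ultimately show "ereal (f (s *\<^sub>R ?z)) \<le> ereal a * ereal (f (s *\<^sub>R x)) + ereal (1 - a) * ereal (f (s *\<^sub>R y))"
      using convex_onD[OF convex, of "1 - a" "s *\<^sub>R x" "s *\<^sub>R y"] a by simp
  qed
  then show "radial_ext f ?z \<le> ereal a * radial_ext f x + ereal (1 - a) * radial_ext f y"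
    using tendsto_le[OF trivial_limit_at_left_real lim radial_ext_tendsto[OF z]] by blast
qed

lemma lsc_radial_ext: "lsc_ereal_on cball1 (radial_ext f)"
  unfolding lsc_ereal_on_def
proof (intro ballI)
  fix x :: "real^'d"
  assume x: "x \<in> cball1"
  show "radial_ext f x \<le> Liminf (at x within cball1) (radial_ext f)"
  proof (subst le_Liminf_iff, intro allI impI)
    fix y
    assume "y < radial_ext f x"
    then obtain s where s: "s \<in> {0<..<1}" "y < ereal (f 0 + radial_slope f x s)"
      using less_radial_ext_slope[OF x] by blast
    have scale: "isCont (\<lambda>z. s *\<^sub>R z) x"
      by (intro continuous_intros)
    have "isCont f (s *\<^sub>R x)"
      using s by (intro isCont scaleR_in_ball1[OF x]) auto
    with scale have "isCont (\<lambda>z. f (s *\<^sub>R z)) x"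
      by (rule isCont_o2)
    then have "isCont (\<lambda>z. f 0 + radial_slope f z s) x"
      unfolding radial_slope_def by (intro continuous_intros) (use s in auto)
    then have "((\<lambda>z. f 0 + radial_slope f z s) \<longlongrightarrow> f 0 + radial_slope f x s) (at x within cball1)"
      unfolding isCont_def by (rule tendsto_within_subset) simp
    then have "((\<lambda>z. ereal (f 0 + radial_slope f z s)) \<longlongrightarrow> ereal (f 0 + radial_slope f x s)) (at x within cball1)"
      by (rule tendsto_ereal)
    then have "\<forall>\<^sub>F z in at x within cball1. y < ereal (f 0 + radial_slope f z s)"
      using s(2) by (rule order_tendstoD(1))
    moreover have "\<forall>\<^sub>F z in at x within cball1. z \<in> cball1"
      by (simp add: eventually_at_filter)
    ultimately show "\<forall>\<^sub>F z in at x within cball1. y < radial_ext f z"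
    proof eventually_elim
      case (elim z)
      then show ?case
        using less_le_trans[OF _ radial_slope_le_radial_ext[OF _ s(1)]] by simp
    qed
  qed
qed

end

section \<open>Essential infimum and i.i.d. edge weights\<close>

lemma AE_ge_of_less_ess_inf:
  assumes "ereal c < ess_inf M X"
  shows "AE \<omega> in M. c \<le> X \<omega>"
proof -
  obtain c' where "AE \<omega> in M. c' \<le> X \<omega>" "c < c'"
    using assms by (auto simp: ess_inf_def less_Sup_iff)
  then show ?thesis
    by (auto intro: eventually_mono)
qed

lemma AE_ge_ess_inf:
  assumes "ess_inf M X = ereal r"
  shows "AE \<omega> in M. r \<le> X \<omega>"
proof -
  have "AE \<omega> in M. r - 1 / real (Suc n) \<le> X \<omega>" for n
    using assms by (intro AE_ge_of_less_ess_inf) simp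
  then have "AE \<omega> in M. \<forall>n. r - 1 / real (Suc n) \<le> X \<omega>"
    by (simp add: AE_all_countable)
  then show ?thesis
  proof (rule eventually_mono)
    fix \<omega>
    assume below: "\<forall>n. r - 1 / real (Suc n) \<le> X \<omega>"
    show "r \<le> X \<omega>"
    proof (rule field_le_epsilon)
      fix e :: real
      assume "0 < e"
      then obtain n where "inverse (real (Suc n)) < e"
        using reals_Archimedean by blast
      then show "r \<le> X \<omega> + e"
        using below[rule_format, of n] by (simp add: inverse_eq_divide)
    qed
  qed
qed

lemma not_AE_ge_ess_inf:
  assumes "ess_inf M X = ereal r" "0 < \<epsilon>"
  shows "\<not> (AE \<omega> in M. r + \<epsilon> \<le> X \<omega>)"
proof
  assume "AE \<omega> in M. r + \<epsilon> \<le> X \<omega>"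
  then have "ereal (r + \<epsilon>) \<le> ess_inf M X"
    unfolding ess_inf_def by (intro Sup_upper) auto
  with assms show False
    by simp
qed

lemma (in prob_space) ess_inf_neq_PInf: "ess_inf M X \<noteq> \<infinity>"
proof
  assume "ess_inf M X = \<infinity>"
  then have "AE \<omega> in M. \<forall>n::nat. real n \<le> X \<omega>"
    by (simp add: AE_all_countable AE_ge_of_less_ess_inf)
  moreover have "\<not> (\<forall>n::nat. real n \<le> X \<omega>)" for \<omega>
    using reals_Archimedean2[of "X \<omega>"] by (auto simp: not_le)
  ultimately show False
    by simp
qed

locale iid_weights = prob_space M for M :: "'w measure" +
  fixes t :: "'w \<Rightarrow> 'd::finite edge \<Rightarrow> real" and i0 :: 'd
  assumes measurable_weight: "\<And>e. (\<lambda>\<omega>. t \<omega> e) \<in> borel_measurable M"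
    and indep_weights: "indep_vars (\<lambda>_. borel) (\<lambda>e \<omega>. t \<omega> e) UNIV"
    and identical_weights: "\<And>e e'. distr M borel (\<lambda>\<omega>. t \<omega> e) = distr M borel (\<lambda>\<omega>. t \<omega> e')"
    and ess_inf_weight_gt_MInf: "ess_inf M (\<lambda>\<omega>. t \<omega> (0, i0)) > - \<infinity>"
begin

definition r0 :: real where
  "r0 = real_of_ereal (ess_inf M (\<lambda>\<omega>. t \<omega> (0, i0)))"

lemma ess_inf_weight_eq: "ess_inf M (\<lambda>\<omega>. t \<omega> (0, i0)) = ereal r0"
  using ess_inf_weight_gt_MInf ess_inf_neq_PInf
  by (cases "ess_inf M (\<lambda>\<omega>. t \<omega> (0, i0))") (auto simp: r0_def)

lemma AE_weight_transfer:
  assumes "{x \<in> space borel. P x} \<in> sets borel" "AE \<omega> in M. P (t \<omega> e)"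
  shows "AE \<omega> in M. P (t \<omega> e')"
proof -
  have "AE x in distr M borel (\<lambda>\<omega>. t \<omega> e). P x"
    using AE_distr_iff[OF measurable_weight assms(1)] assms(2) by simp
  then have "AE x in distr M borel (\<lambda>\<omega>. t \<omega> e'). P x"
    by (subst identical_weights[of e' e])
  then show ?thesis
    using AE_distr_iff[OF measurable_weight assms(1)] by simp
qed

lemma prob_weight_ge: "prob {\<omega> \<in> space M. c \<le> t \<omega> e} = prob {\<omega> \<in> space M. c \<le> t \<omega> (0, i0)}"
proof -
  have "prob {\<omega> \<in> space M. c \<le> t \<omega> e} = measure (distr M borel (\<lambda>\<omega>. t \<omega> e)) {c..}" for e
    by (subst measure_distr[OF measurable_weight]) (auto intro: arg_cong[where f = prob])
  then show ?thesis
    by (simp only: identical_weights[of e "(0, i0)"])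
qed

lemma prob_all_weights_ge:
  assumes "finite F" "F \<noteq> {}"
  shows "prob (\<Inter>e\<in>F. {\<omega> \<in> space M. c \<le> t \<omega> e}) = prob {\<omega> \<in> space M. c \<le> t \<omega> (0, i0)} ^ card F"
proof -
  have "indep_sets (\<lambda>e. {(\<lambda>\<omega>. t \<omega> e) -` B \<inter> space M | B. B \<in> sets borel}) UNIV"
    using indep_weights by (simp add: indep_vars_def2)
  moreover have "{\<omega> \<in> space M. c \<le> t \<omega> e} \<in> {(\<lambda>\<omega>. t \<omega> e) -` B \<inter> space M | B. B \<in> sets borel}" for e
    by (intro CollectI exI[of _ "{c..}"]) auto
  ultimately have "prob (\<Inter>e\<in>F. {\<omega> \<in> space M. c \<le> t \<omega> e}) = (\<Prod>e\<in>F. prob {\<omega> \<in> space M. c \<le> t \<omega> e})"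
    using assms by (intro indep_setsD) auto
  also have "\<dots> = (\<Prod>e\<in>F. prob {\<omega> \<in> space M. c \<le> t \<omega> (0, i0)})"
    by (intro prod.cong refl prob_weight_ge)
  finally show ?thesis
    by simp
qed

lemma prob_weight_ge_less_1:
  assumes "0 < \<epsilon>"
  shows "prob {\<omega> \<in> space M. r0 + \<epsilon> \<le> t \<omega> (0, i0)} < 1"
proof (rule ccontr)
  assume "\<not> ?thesis"
  then have "prob {\<omega> \<in> space M. r0 + \<epsilon> \<le> t \<omega> (0, i0)} = 1"
    using prob_le_1[of "{\<omega> \<in> space M. r0 + \<epsilon> \<le> t \<omega> (0, i0)}"] by simp
  then have "AE \<omega> in M. r0 + \<epsilon> \<le> t \<omega> (0, i0)"
    by (rule AE_prob_1[THEN eventually_mono]) simp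
  with not_AE_ge_ess_inf[OF ess_inf_weight_eq assms] show False
    by blast
qed

text \<open>The events r0 + \<epsilon> \<le> t e on infinitely many distinct edges are independent with a
  common probability below 1.\<close>

lemma AE_exists_weight_lt:
  assumes "0 < \<epsilon>"
  shows "AE \<omega> in M. \<exists>e. t \<omega> e < r0 + \<epsilon>"
proof -
  define A where "A e = {\<omega> \<in> space M. r0 + \<epsilon> \<le> t \<omega> e}" for e
  define q where "q = prob (A (0, i0))"
  define E :: "nat \<Rightarrow> 'd edge" where "E n = ((\<chi> j. int n), i0)" for n
  define N where "N = (\<Inter>n. A (E n))"
  have "A e = (\<lambda>\<omega>. t \<omega> e) -` {r0 + \<epsilon>..} \<inter> space M" for e
    by (auto simp: A_def)
  then have A_sets: "A e \<in> sets M" for e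
    using measurable_sets[OF measurable_weight] by simp
  have "q < 1"
    using prob_weight_ge_less_1[OF assms] by (simp add: q_def A_def)
  have "inj E"
    by (auto simp: inj_def E_def vec_eq_iff)
  then have bound: "prob N \<le> q ^ Suc k" for k
  proof -
    have "prob N \<le> prob (\<Inter>e\<in>E ` {..k}. A e)"
      unfolding N_def using A_sets by (intro finite_measure_mono) auto
    also have "\<dots> = q ^ Suc k"
      using prob_all_weights_ge[of "E ` {..k}" "r0 + \<epsilon>"] card_image[OF inj_on_subset[OF \<open>inj E\<close>]]
      by (simp add: A_def q_def)
    finally show ?thesis .
  qed
  have "(\<lambda>k. q ^ Suc k) \<longlonglongrightarrow> 0"
    using \<open>q < 1\<close> by (intro LIMSEQ_Suc LIMSEQ_power_zero) (auto simp: q_def)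
  then have "prob N \<le> 0"
    using LIMSEQ_le_const[of "\<lambda>k. q ^ Suc k" 0 "prob N"] bound by blast
  then have "prob N = 0"
    using measure_nonneg[of M N] by linarith
  moreover have "N \<in> sets M"
    using A_sets by (simp add: N_def)
  ultimately have "N \<in> null_sets M"
    by (simp add: null_sets_def emeasure_eq_measure)
  then show ?thesis
    by (rule AE_I') (auto simp: N_def A_def E_def not_less)
qed

lemma AE_weights_inf: "AE \<omega> in M. (\<forall>e. r0 \<le> t \<omega> e) \<and> (\<forall>\<epsilon>>0. \<exists>e. t \<omega> e < r0 + \<epsilon>)"
proof -
  have "AE \<omega> in M. r0 \<le> t \<omega> e" for e
    using AE_ge_ess_inf[OF ess_inf_weight_eq] by (rule AE_weight_transfer[rotated]) simp
  then have ge: "AE \<omega> in M. \<forall>e. r0 \<le> t \<omega> e"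
    by (simp add: AE_all_countable)
  have "AE \<omega> in M. \<forall>n. \<exists>e. t \<omega> e < r0 + 1 / real (Suc n)"
    unfolding AE_all_countable by (intro allI AE_exists_weight_lt) simp
  then have "AE \<omega> in M. \<forall>\<epsilon>>0. \<exists>e. t \<omega> e < r0 + \<epsilon>"
  proof (rule eventually_mono, intro allI impI)
    fix \<omega> and \<epsilon> :: real
    assume cheap: "\<forall>n. \<exists>e. t \<omega> e < r0 + 1 / real (Suc n)" and "0 < \<epsilon>"
    then obtain n where n: "inverse (real (Suc n)) < \<epsilon>"
      using reals_Archimedean by blast
    obtain e where "t \<omega> e < r0 + 1 / real (Suc n)"
      using cheap by blast
    with n show "\<exists>e. t \<omega> e < r0 + \<epsilon>"
      by (intro exI[of _ e]) (simp add: inverse_eq_divide)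
  qed
  with ge show ?thesis
    by eventually_elim blast
qed

end

section \<open>Lattice approximation and path lengths\<close>

lemma norm1_of_intvec: "norm1 (of_intvec x) = real_of_int (norm1_int x)"
  by (simp add: norm1_def of_intvec_def norm1_int_def)

lemma norm1_int_div_tendsto:
  assumes "(\<lambda>n. (1 / real n) *\<^sub>R of_intvec (x n)) \<longlonglongrightarrow> \<xi>"
  shows "(\<lambda>n. real_of_int (norm1_int (x n)) / real n) \<longlonglongrightarrow> norm1 \<xi>"
proof -
  have "(\<lambda>n. norm1 ((1 / real n) *\<^sub>R of_intvec (x n))) \<longlonglongrightarrow> norm1 \<xi>"
    using continuous_on_norm1[of UNIV] assms
    by (intro continuous_on_tendsto_compose[of UNIV norm1]) auto
  then show ?thesis
    by (simp add: norm1_scaleR norm1_of_intvec)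
qed

lemma floor_mult_div_tendsto: "(\<lambda>n. real_of_int \<lfloor>real n * c\<rfloor> / real n) \<longlonglongrightarrow> c"
proof (rule tendsto_sandwich[of "\<lambda>n. c - 1 / real n" _ _ "\<lambda>n. c"])
  show "\<forall>\<^sub>F n in sequentially. c - 1 / real n \<le> real_of_int \<lfloor>real n * c\<rfloor> / real n"
    using eventually_gt_at_top[of "0::nat"]
  proof eventually_elim
    case (elim n)
    have "real n * c - 1 \<le> real_of_int \<lfloor>real n * c\<rfloor>"
      by linarith
    then have "(real n * c - 1) / real n \<le> real_of_int \<lfloor>real n * c\<rfloor> / real n"
      by (simp add: divide_right_mono)
    moreover have "c - 1 / real n = (real n * c - 1) / real n"
      using elim by (simp add: field_simps)
    ultimately show ?case
      by simp
  qed
  show "\<forall>\<^sub>F n in sequentially. real_of_int \<lfloor>real n * c\<rfloor> / real n \<le> c"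
    using eventually_gt_at_top[of "0::nat"]
    by eventually_elim (simp add: field_simps)
  show "(\<lambda>n. c - 1 / real n) \<longlonglongrightarrow> c"
    using tendsto_diff[OF tendsto_const lim_1_over_n] by simp
qed simp

lemma nat_ceiling_div_tendsto:
  assumes "(\<lambda>n. c n / real n) \<longlonglongrightarrow> L" "0 \<le> L"
  shows "(\<lambda>n. real (nat \<lceil>c n\<rceil>) / real n) \<longlonglongrightarrow> L"
proof -
  have lower: "(\<lambda>n. max (c n / real n) 0) \<longlonglongrightarrow> L"
    using tendsto_max[OF assms(1) tendsto_const[of 0]] assms(2) by (simp add: max_def)
  have upper: "(\<lambda>n. max (c n / real n) 0 + 1 / real n) \<longlonglongrightarrow> L"
    using tendsto_add[OF lower lim_1_over_n] by simp
  have below: "max (c n / real n) 0 \<le> real (nat \<lceil>c n\<rceil>) / real n" if "0 < n" for n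
  proof -
    have "max (c n / real n) 0 = max (c n) 0 / real n"
      using that by (simp add: max_def field_simps)
    also have "\<dots> \<le> real (nat \<lceil>c n\<rceil>) / real n"
      by (intro divide_right_mono) linarith+
    finally show ?thesis .
  qed
  have above: "real (nat \<lceil>c n\<rceil>) / real n \<le> max (c n / real n) 0 + 1 / real n" if "0 < n" for n
  proof -
    have "real (nat \<lceil>c n\<rceil>) / real n \<le> (max (c n) 0 + 1) / real n"
      by (intro divide_right_mono) linarith+
    also have "\<dots> = max (c n / real n) 0 + 1 / real n"
      using that by (simp add: max_def field_simps)
    finally show ?thesis .
  qed
  show ?thesis
  proof (rule tendsto_sandwich[OF _ _ lower upper])
    show "\<forall>\<^sub>F n in sequentially. max (c n / real n) 0 \<le> real (nat \<lceil>c n\<rceil>) / real n"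
      using eventually_gt_at_top[of "0::nat"] by eventually_elim (rule below)
    show "\<forall>\<^sub>F n in sequentially. real (nat \<lceil>c n\<rceil>) / real n \<le> max (c n / real n) 0 + 1 / real n"
      using eventually_gt_at_top[of "0::nat"] by eventually_elim (rule above)
  qed
qed

definition lattice_approx :: "real^'d::finite \<Rightarrow> nat \<Rightarrow> int^'d" where
  "lattice_approx \<xi> n = (\<chi> i. \<lfloor>real n * \<xi> $ i\<rfloor>)"

lemma lattice_approx_0 [simp]: "lattice_approx 0 n = 0"
  by (simp add: lattice_approx_def vec_eq_iff)

lemma lattice_approx_tendsto: "(\<lambda>n. (1 / real n) *\<^sub>R of_intvec (lattice_approx \<xi> n)) \<longlonglongrightarrow> \<xi>"
  by (rule vec_tendstoI) (use floor_mult_div_tendsto in \<open>simp add: lattice_approx_def of_intvec_def\<close>)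

definition padded_len :: "int^'d::finite \<Rightarrow> real \<Rightarrow> nat" where
  "padded_len x c = nat (norm1_int x) + 2 * nat \<lceil>c\<rceil>"

lemma reach_padded_len: "x \<in> reach (padded_len x c)"
  by (simp add: reach_iff padded_len_def norm1_int_nonneg)

lemma padded_len_mono: "c \<le> c' \<Longrightarrow> padded_len x c \<le> padded_len x c'"
  unfolding padded_len_def by (intro add_left_mono mult_left_mono nat_mono ceiling_mono) auto

lemma padded_len_tendsto:
  assumes "(\<lambda>n. (1 / real n) *\<^sub>R of_intvec (x n)) \<longlonglongrightarrow> \<xi>" "(\<lambda>n. c n / real n) \<longlonglongrightarrow> L" "0 \<le> L"
  shows "(\<lambda>n. real (padded_len (x n) (c n)) / real n) \<longlonglongrightarrow> norm1 \<xi> + 2 * L"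
proof -
  have "(\<lambda>n. real (nat (norm1_int (x n))) / real n + 2 * (real (nat \<lceil>c n\<rceil>) / real n)) \<longlonglongrightarrow> norm1 \<xi> + 2 * L"
    using norm1_int_div_tendsto[OF assms(1)] nat_ceiling_div_tendsto[OF assms(2,3)]
    by (intro tendsto_intros) (simp_all add: norm1_int_nonneg)
  then show ?thesis
    by (simp add: padded_len_def add_divide_distrib)
qed

text \<open>A path to x n of length about n \<alpha>: a shortest path followed by bounces x \<alpha> n
  back-and-forth pairs; grid_len interpolates in N steps between the two extremes.\<close>

definition bounces :: "(nat \<Rightarrow> int^'d::finite) \<Rightarrow> real \<Rightarrow> nat \<Rightarrow> nat" where
  "bounces x \<alpha> n = nat \<lceil>(real n * \<alpha> - real_of_int (norm1_int (x n))) / 2\<rceil>"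

definition path_len :: "(nat \<Rightarrow> int^'d::finite) \<Rightarrow> real \<Rightarrow> nat \<Rightarrow> nat" where
  "path_len x \<alpha> n = padded_len (x n) ((real n * \<alpha> - real_of_int (norm1_int (x n))) / 2)"

lemma path_len_eq: "path_len x \<alpha> n = nat (norm1_int (x n)) + 2 * bounces x \<alpha> n"
  by (simp add: path_len_def padded_len_def bounces_def)

lemma reach_path_len: "x n \<in> reach (path_len x \<alpha> n)"
  by (simp add: path_len_def reach_padded_len)

lemma path_len_mono: "\<alpha> \<le> \<beta> \<Longrightarrow> path_len x \<alpha> n \<le> path_len x \<beta> n"
  unfolding path_len_def by (intro padded_len_mono divide_right_mono diff_right_mono mult_left_mono) auto

lemma half_excess_tendsto:
  assumes "(\<lambda>n. (1 / real n) *\<^sub>R of_intvec (x n)) \<longlonglongrightarrow> \<xi>"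
  shows "(\<lambda>n. (real n * \<alpha> - real_of_int (norm1_int (x n))) / 2 / real n) \<longlonglongrightarrow> (\<alpha> - norm1 \<xi>) / 2"
proof -
  have "(\<lambda>n. (\<alpha> - real_of_int (norm1_int (x n)) / real n) / 2) \<longlonglongrightarrow> (\<alpha> - norm1 \<xi>) / 2"
    by (intro tendsto_intros norm1_int_div_tendsto[OF assms]) simp
  moreover have "\<forall>\<^sub>F n in sequentially. (\<alpha> - real_of_int (norm1_int (x n)) / real n) / 2 =
      (real n * \<alpha> - real_of_int (norm1_int (x n))) / 2 / real n"
    using eventually_gt_at_top[of "0::nat"] by eventually_elim (simp add: field_simps)
  ultimately show ?thesis
    by (rule Lim_transform_eventually)
qed

lemma bounces_tendsto:
  assumes "(\<lambda>n. (1 / real n) *\<^sub>R of_intvec (x n)) \<longlonglongrightarrow> \<xi>" "norm1 \<xi> \<le> \<alpha>"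
  shows "(\<lambda>n. real (bounces x \<alpha> n) / real n) \<longlonglongrightarrow> (\<alpha> - norm1 \<xi>) / 2"
  unfolding bounces_def using assms
  by (intro nat_ceiling_div_tendsto[OF half_excess_tendsto]) auto

lemma path_len_tendsto:
  assumes "(\<lambda>n. (1 / real n) *\<^sub>R of_intvec (x n)) \<longlonglongrightarrow> \<xi>" "norm1 \<xi> \<le> \<alpha>"
  shows "(\<lambda>n. real (path_len x \<alpha> n) / real n) \<longlonglongrightarrow> \<alpha>"
proof -
  have "(\<lambda>n. real (path_len x \<alpha> n) / real n) \<longlonglongrightarrow> norm1 \<xi> + 2 * ((\<alpha> - norm1 \<xi>) / 2)"
    unfolding path_len_def using assms by (intro padded_len_tendsto half_excess_tendsto) auto
  moreover have "norm1 \<xi> + 2 * ((\<alpha> - norm1 \<xi>) / 2) = \<alpha>"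
    by (simp add: field_simps)
  ultimately show ?thesis
    by (simp only:)
qed

definition grid_len :: "(nat \<Rightarrow> int^'d::finite) \<Rightarrow> real \<Rightarrow> nat \<Rightarrow> nat \<Rightarrow> nat \<Rightarrow> nat" where
  "grid_len x \<alpha> N i n = padded_len (x n) (real i * real (bounces x \<alpha> n) / real N)"

lemma reach_grid_len: "x n \<in> reach (grid_len x \<alpha> N i n)"
  by (simp add: grid_len_def reach_padded_len)

lemma grid_len_tendsto:
  assumes "(\<lambda>n. (1 / real n) *\<^sub>R of_intvec (x n)) \<longlonglongrightarrow> \<xi>" "norm1 \<xi> \<le> \<alpha>" "0 < N"
  shows "(\<lambda>n. real (grid_len x \<alpha> N i n) / real n) \<longlonglongrightarrow> norm1 \<xi> + real i * (\<alpha> - norm1 \<xi>) / real N"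
proof -
  have "(\<lambda>n. real i / real N * (real (bounces x \<alpha> n) / real n)) \<longlonglongrightarrow> real i / real N * ((\<alpha> - norm1 \<xi>) / 2)"
    by (intro tendsto_intros bounces_tendsto[OF assms(1,2)])
  then have "(\<lambda>n. real i * real (bounces x \<alpha> n) / real N / real n) \<longlonglongrightarrow> real i / real N * ((\<alpha> - norm1 \<xi>) / 2)"
    by (simp add: field_simps)
  from padded_len_tendsto[OF assms(1) this]
  have "(\<lambda>n. real (grid_len x \<alpha> N i n) / real n) \<longlonglongrightarrow> norm1 \<xi> + 2 * (real i / real N * ((\<alpha> - norm1 \<xi>) / 2))"
    using assms(2) by (simp add: grid_len_def)
  moreover have "norm1 \<xi> + 2 * (real i / real N * ((\<alpha> - norm1 \<xi>) / 2)) = norm1 \<xi> + real i * (\<alpha> - norm1 \<xi>) / real N"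
    using assms(3) by (simp add: field_simps)
  ultimately show ?thesis
    by (simp only:)
qed

section \<open>Shape functions\<close>

lemma tendsto_le_frequently:
  fixes f g :: "'a \<Rightarrow> real"
  assumes "(f \<longlongrightarrow> a) F" "(g \<longlongrightarrow> b) F" "\<exists>\<^sub>F x in F. f x \<le> g x"
  shows "a \<le> b"
proof (rule ccontr)
  assume "\<not> a \<le> b"
  then have "\<forall>\<^sub>F x in F. 0 < f x - g x"
    using order_tendstoD(1)[OF tendsto_diff[OF assms(1,2)], of 0] by simp
  then have "\<forall>\<^sub>F x in F. \<not> f x \<le> g x"
    by (rule eventually_mono) simp
  with assms(3) show False
    by (simp add: frequently_def)
qed

lemma tendsto_div_ge:
  assumes "(\<lambda>n. a n / real n) \<longlonglongrightarrow> A" "(\<lambda>n. real (k n) / real n) \<longlonglongrightarrow> \<kappa>"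
    and "\<And>n. real (k n) * r \<le> a n"
  shows "\<kappa> * r \<le> A"
proof (rule tendsto_le[OF trivial_limit_sequentially assms(1)])
  show "(\<lambda>n. real (k n) / real n * r) \<longlonglongrightarrow> \<kappa> * r"
    by (intro tendsto_intros assms(2))
  show "\<forall>\<^sub>F n in sequentially. real (k n) / real n * r \<le> a n / real n"
    using assms(3) by (intro always_eventually allI) (metis divide_right_mono of_nat_0_le_iff times_divide_eq_left)
qed

lemma Gpp_origin_limit_le_weight:
  assumes lim: "(\<lambda>n. Gpp w (k n) 0 / real n) \<longlonglongrightarrow> G" and k: "(\<lambda>n. real (k n) / real n) \<longlonglongrightarrow> 1"
    and even: "\<And>n. even (k n)" and long: "\<And>n. n \<le> k n"
  shows "G \<le> w e"
proof -
  obtain z i where e: "e = (z, i)"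
    by (cases e)
  obtain L C where bounce_far: "\<And>j. Gpp w (2 * L + 2 * j) 0 \<le> C + 2 * real j * w e"
    using Gpp_origin_loop_via_edge[of w z i] e by blast
  have "Gpp w (k n) 0 / real n \<le> (C - 2 * real L * w e) / real n + real (k n) / real n * w e"
    if "2 * L \<le> n" for n
  proof -
    obtain m where m: "k n = 2 * m"
      using even by blast
    then have "k n = 2 * L + 2 * (m - L)"
      using long[of n] that by simp
    then have "Gpp w (k n) 0 \<le> (C - 2 * real L * w e) + real (k n) * w e"
      using bounce_far[of "m - L"] m by (simp add: algebra_simps)
    then show ?thesis
      by (simp add: divide_right_mono add_divide_distrib[symmetric])
  qed
  moreover have "(\<lambda>n. (C - 2 * real L * w e) / real n + real (k n) / real n * w e) \<longlonglongrightarrow> 0 + 1 * w e"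
    by (intro tendsto_intros k)
  ultimately show ?thesis
    using tendsto_le[OF trivial_limit_sequentially _ lim] eventually_ge_at_top[of "2 * L"]
    by (metis (mono_tags, lifting) add_0 eventually_mono mult_1)
qed

lemma grid_choice:
  fixes J h N :: nat
  assumes "J \<le> h" "0 < N"
  obtains i where "1 \<le> i" "i \<le> N" "real J \<le> real i * real h / real N"
    "real i * real h / real N \<le> real J + real h / real N"
proof -
  define q where "q = real J * real N / real h"
  have J: "real J = q * real h / real N"
    using assms by (cases "h = 0") (auto simp: q_def)
  have q: "0 \<le> q" "q \<le> real N"
    using assms by (auto simp: q_def divide_le_eq mult.commute mult_left_mono)
  define i where "i = max 1 (nat \<lceil>q\<rceil>)"
  have i: "1 \<le> i" "i \<le> N" "q \<le> real i" "real i \<le> q + 1"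
    using q assms by (auto simp: i_def le_nat_iff ceiling_le_iff) linarith+
  have "real J \<le> real i * real h / real N"
    unfolding J using i(3) by (intro divide_right_mono mult_right_mono) auto
  moreover have "real i * real h / real N \<le> (q + 1) * real h / real N"
    using i(4) by (intro divide_right_mono mult_right_mono) auto
  moreover have "(q + 1) * real h / real N = real J + real h / real N"
    unfolding J by (simp add: distrib_right add_divide_distrib)
  ultimately show ?thesis
    using i(1,2) by (intro that[of i]) auto
qed

lemma Gpp_grid_le_Gpp_o:
  assumes N: "0 < N"
  shows "\<exists>i\<in>{1..N}. Gpp w (grid_len x \<alpha> N i n) (x n) \<le>
      Gpp_o w (path_len x \<alpha> n) (x n) + 2 * (real (bounces x \<alpha> n) / real N + 1) * \<bar>w (0, i0)\<bar>"
proof -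
  let ?l = "nat (norm1_int (x n))" and ?h = "bounces x \<alpha> n"
  obtain m where m: "m \<le> path_len x \<alpha> n" "x n \<in> reach m" "Gpp w m (x n) \<le> Gpp_o w (path_len x \<alpha> n) (x n)"
    using Gpp_le_Gpp_o[OF set_mp[OF reach_subset_reach_o[OF order_refl] reach_path_len]] .
  have "norm1_int (x n) \<le> int m" "even (int m - norm1_int (x n))"
    using m(2) by (auto simp: reach_iff)
  then obtain J where J: "m = ?l + 2 * J"
    using norm1_int_nonneg[of "x n"]
    by (metis (no_types, lifting) dvdE even_of_nat_iff int_nat_eq le_add_diff_inverse nat_le_iff of_nat_diff)
  have "J \<le> ?h"
    using m(1) J by (simp add: path_len_eq)
  then obtain i where i: "1 \<le> i" "i \<le> N" "real J \<le> real i * real ?h / real N"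
      "real i * real ?h / real N \<le> real J + real ?h / real N"
    using grid_choice N by blast
  define c where "c = nat \<lceil>real i * real ?h / real N\<rceil>"
  have c: "J \<le> c" "real c \<le> real J + real ?h / real N + 1"
    using i(3,4) unfolding c_def by linarith+
  have "grid_len x \<alpha> N i n = length (bounce i0 (c - J)) + m"
    using c(1) J by (simp add: grid_len_def padded_len_def c_def length_bounce)
  then have loop: "Gpp w (grid_len x \<alpha> N i n) (x n) \<le> 2 * real (c - J) * w (0, i0) + Gpp w m (x n)"
    using Gpp_closed_loop[OF sum_bounce m(2), of w] by (simp add: path_weight_bounce)
  have "2 * real (c - J) * w (0, i0) \<le> 2 * real (c - J) * \<bar>w (0, i0)\<bar>"
    by (intro mult_left_mono) auto
  also have "\<dots> \<le> 2 * (real ?h / real N + 1) * \<bar>w (0, i0)\<bar>"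
    using c by (intro mult_right_mono) (auto simp: of_nat_diff)
  finally show ?thesis
    using loop m(3) i(1,2) by (intro bexI[of _ i]) auto
qed

lemma limit_grid_le:
  assumes grid: "\<And>i. 0 < i \<Longrightarrow> (\<lambda>n. Gpp w (grid_len x \<alpha> N i n) (x n) / real n) \<longlonglongrightarrow> P i"
    and lazy: "(\<lambda>n. Gpp_o w (path_len x \<alpha> n) (x n) / real n) \<longlonglongrightarrow> V"
    and bounces: "(\<lambda>n. real (bounces x \<alpha> n) / real n) \<longlonglongrightarrow> \<beta>" and N: "0 < N"
  shows "\<exists>i\<in>{1..N}. P i \<le> V + 2 * \<bar>w (0, i0)\<bar> * \<beta> / real N"
proof -
  let ?C = "\<bar>w (0, i0)\<bar>"
  define u where "u n = Gpp_o w (path_len x \<alpha> n) (x n) / real n +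
    2 * ?C / real N * (real (bounces x \<alpha> n) / real n) + 2 * ?C / real n" for n
  have "u \<longlonglongrightarrow> V + 2 * ?C / real N * \<beta> + 0"
    unfolding u_def by (intro tendsto_add lazy tendsto_mult_left bounces lim_const_over_n)
  then have u: "u \<longlonglongrightarrow> V + 2 * ?C * \<beta> / real N"
    by simp
  have "\<forall>\<^sub>F n in sequentially. \<exists>i\<in>{1..N}. Gpp w (grid_len x \<alpha> N i n) (x n) / real n \<le> u n"
    using eventually_gt_at_top[of "0::nat"]
  proof eventually_elim
    case (elim n)
    obtain i where "i \<in> {1..N}" and i: "Gpp w (grid_len x \<alpha> N i n) (x n) \<le>
        Gpp_o w (path_len x \<alpha> n) (x n) + 2 * (real (bounces x \<alpha> n) / real N + 1) * ?C"
      using Gpp_grid_le_Gpp_o[OF N] by blast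
    then have "Gpp w (grid_len x \<alpha> N i n) (x n) / real n \<le>
        (Gpp_o w (path_len x \<alpha> n) (x n) + 2 * (real (bounces x \<alpha> n) / real N + 1) * ?C) / real n"
      by (simp add: divide_right_mono)
    also have "\<dots> = u n"
      using elim N by (simp add: u_def field_simps)
    finally show ?case
      using \<open>i \<in> {1..N}\<close> by blast
  qed
  then have "\<exists>\<^sub>F n in sequentially. \<exists>i\<in>{1..N}. Gpp w (grid_len x \<alpha> N i n) (x n) / real n \<le> u n"
    by (rule eventually_frequently[OF trivial_limit_sequentially])
  from frequently_bex_finite[OF finite_atLeastAtMost this] obtain i where i: "i \<in> {1..N}"
    and "\<exists>\<^sub>F n in sequentially. Gpp w (grid_len x \<alpha> N i n) (x n) / real n \<le> u n"
    by blast
  then have "P i \<le> V + 2 * ?C * \<beta> / real N"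
    using tendsto_le_frequently[OF grid u] by simp
  with i show ?thesis
    by blast
qed

locale shape_functions = iid_weights M t i0
  for M :: "'w measure" and t :: "'w \<Rightarrow> 'd::finite edge \<Rightarrow> real" and i0 :: 'd +
  fixes g go :: "real^'d \<Rightarrow> real"
  assumes g_lim: "\<And>\<xi> \<alpha> k x. \<alpha> > norm1 \<xi> \<Longrightarrow> (\<lambda>n. real (k n) / real n) \<longlonglongrightarrow> \<alpha> \<Longrightarrow>
      (\<forall>n. x n \<in> reach (k n)) \<Longrightarrow> (\<lambda>n. (1 / real n) *\<^sub>R of_intvec (x n)) \<longlonglongrightarrow> \<xi> \<Longrightarrow>
      AE \<omega> in M. (\<lambda>n. Gpp (t \<omega>) (k n) (x n) / real n) \<longlonglongrightarrow> \<alpha> * g ((1 / \<alpha>) *\<^sub>R \<xi>)"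
    and go_lim: "\<And>\<xi> \<alpha> k y. \<alpha> > norm1 \<xi> \<Longrightarrow> (\<lambda>n. real (k n) / real n) \<longlonglongrightarrow> \<alpha> \<Longrightarrow>
      (\<forall>n. y n \<in> reach_o (k n)) \<Longrightarrow> (\<lambda>n. (1 / real n) *\<^sub>R of_intvec (y n)) \<longlonglongrightarrow> \<xi> \<Longrightarrow>
      AE \<omega> in M. (\<lambda>n. Gpp_o (t \<omega>) (k n) (y n) / real n) \<longlonglongrightarrow> \<alpha> * go ((1 / \<alpha>) *\<^sub>R \<xi>)"
    and convex_g: "convex_on ball1 g"
    and convex_go: "convex_on ball1 go"
begin

sublocale g: convex_on_ball1 g
  by (rule convex_on_ball1.intro[OF convex_g])

sublocale go: convex_on_ball1 go
  by (rule convex_on_ball1.intro[OF convex_go])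

definition persp :: "real^'d \<Rightarrow> real \<Rightarrow> real" where
  "persp \<xi> \<tau> = \<tau> * g ((1 / \<tau>) *\<^sub>R \<xi>)"

lemma shape_lim_lattice:
  assumes "norm1 \<xi> < \<alpha>"
  shows "AE \<omega> in M. (\<lambda>n. Gpp (t \<omega>) (path_len (lattice_approx \<xi>) \<alpha> n) (lattice_approx \<xi> n) / real n)
      \<longlonglongrightarrow> \<alpha> * g ((1 / \<alpha>) *\<^sub>R \<xi>)"
    and "AE \<omega> in M. (\<lambda>n. Gpp_o (t \<omega>) (path_len (lattice_approx \<xi>) \<alpha> n) (lattice_approx \<xi> n) / real n)
      \<longlonglongrightarrow> \<alpha> * go ((1 / \<alpha>) *\<^sub>R \<xi>)"
proof -
  have k: "(\<lambda>n. real (path_len (lattice_approx \<xi>) \<alpha> n) / real n) \<longlonglongrightarrow> \<alpha>"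
    by (rule path_len_tendsto[OF lattice_approx_tendsto]) (use assms in simp)
  show "AE \<omega> in M. (\<lambda>n. Gpp (t \<omega>) (path_len (lattice_approx \<xi>) \<alpha> n) (lattice_approx \<xi> n) / real n)
      \<longlonglongrightarrow> \<alpha> * g ((1 / \<alpha>) *\<^sub>R \<xi>)"
    by (rule g_lim[OF assms k _ lattice_approx_tendsto]) (simp add: reach_path_len)
  show "AE \<omega> in M. (\<lambda>n. Gpp_o (t \<omega>) (path_len (lattice_approx \<xi>) \<alpha> n) (lattice_approx \<xi> n) / real n)
      \<longlonglongrightarrow> \<alpha> * go ((1 / \<alpha>) *\<^sub>R \<xi>)"
    by (rule go_lim[OF assms k _ lattice_approx_tendsto]) (use reach_path_len reach_subset_reach_o in blast)
qed

lemma shape_ge_r0: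
  assumes \<zeta>: "\<zeta> \<in> ball1"
  shows "r0 \<le> g \<zeta>" "min r0 0 \<le> go \<zeta>"
proof -
  let ?x = "lattice_approx \<zeta>" and ?k = "path_len (lattice_approx \<zeta>) 1"
  have \<zeta>1: "norm1 \<zeta> < 1"
    using \<zeta> by simp
  have "AE \<omega> in M. (\<forall>e. r0 \<le> t \<omega> e) \<and> (\<lambda>n. Gpp (t \<omega>) (?k n) (?x n) / real n) \<longlonglongrightarrow> g \<zeta>
      \<and> (\<lambda>n. Gpp_o (t \<omega>) (?k n) (?x n) / real n) \<longlonglongrightarrow> go \<zeta>"
    using AE_weights_inf shape_lim_lattice[OF \<zeta>1] by eventually_elim auto
  then obtain \<omega> where \<omega>: "\<And>e. r0 \<le> t \<omega> e" "(\<lambda>n. Gpp (t \<omega>) (?k n) (?x n) / real n) \<longlonglongrightarrow> g \<zeta>"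
    "(\<lambda>n. Gpp_o (t \<omega>) (?k n) (?x n) / real n) \<longlonglongrightarrow> go \<zeta>"
    using eventually_happens'[OF ae_filter_bot] by blast
  have k: "(\<lambda>n. real (?k n) / real n) \<longlonglongrightarrow> 1"
    by (rule path_len_tendsto[OF lattice_approx_tendsto]) (use \<zeta>1 in simp)
  show "r0 \<le> g \<zeta>"
    using tendsto_div_ge[OF \<omega>(2) k Gpp_ge[OF \<omega>(1) reach_path_len]] by simp
  have "?x n \<in> reach_o (?k n)" for n
    using reach_path_len reach_subset_reach_o by blast
  then show "min r0 0 \<le> go \<zeta>"
    using tendsto_div_ge[OF \<omega>(3) k Gpp_o_ge[OF \<omega>(1)]] by simp
qed

lemma go_scaled_le_g_scaled:
  assumes "norm1 \<xi> < \<tau>" "\<tau> \<le> \<alpha>"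
  shows "\<alpha> * go ((1 / \<alpha>) *\<^sub>R \<xi>) \<le> \<tau> * g ((1 / \<tau>) *\<^sub>R \<xi>)"
proof -
  let ?x = "lattice_approx \<xi>"
  have "AE \<omega> in M. (\<lambda>n. Gpp (t \<omega>) (path_len ?x \<tau> n) (?x n) / real n) \<longlonglongrightarrow> \<tau> * g ((1 / \<tau>) *\<^sub>R \<xi>)
      \<and> (\<lambda>n. Gpp_o (t \<omega>) (path_len ?x \<alpha> n) (?x n) / real n) \<longlonglongrightarrow> \<alpha> * go ((1 / \<alpha>) *\<^sub>R \<xi>)"
    using shape_lim_lattice(1)[OF assms(1)] shape_lim_lattice(2)[OF less_le_trans[OF assms]]
    by eventually_elim auto
  then obtain \<omega> where
    "(\<lambda>n. Gpp (t \<omega>) (path_len ?x \<tau> n) (?x n) / real n) \<longlonglongrightarrow> \<tau> * g ((1 / \<tau>) *\<^sub>R \<xi>)"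
    "(\<lambda>n. Gpp_o (t \<omega>) (path_len ?x \<alpha> n) (?x n) / real n) \<longlonglongrightarrow> \<alpha> * go ((1 / \<alpha>) *\<^sub>R \<xi>)"
    using eventually_happens'[OF ae_filter_bot] by blast
  then show ?thesis
  proof (rule tendsto_le[OF trivial_limit_sequentially])
    show "\<forall>\<^sub>F n in sequentially. Gpp_o (t \<omega>) (path_len ?x \<alpha> n) (?x n) / real n
        \<le> Gpp (t \<omega>) (path_len ?x \<tau> n) (?x n) / real n"
      using assms(2) by (intro always_eventually allI divide_right_mono Gpp_o_le_Gpp reach_path_len path_len_mono) auto
  qed
qed

lemma go_le_g: "\<zeta> \<in> ball1 \<Longrightarrow> go \<zeta> \<le> g \<zeta>"
  using go_scaled_le_g_scaled[of \<zeta> 1 1] by simp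

lemma g_zero: "g 0 = r0"
proof (rule antisym)
  let ?k = "path_len (lattice_approx (0 :: real^'d)) 1"
  have "AE \<omega> in M. (\<forall>\<epsilon>>0. \<exists>e. t \<omega> e < r0 + \<epsilon>) \<and> (\<lambda>n. Gpp (t \<omega>) (?k n) 0 / real n) \<longlonglongrightarrow> g 0"
    using AE_weights_inf shape_lim_lattice(1)[of 0 1, simplified] by eventually_elim auto
  then obtain \<omega> where cheap: "\<And>\<epsilon>. 0 < \<epsilon> \<Longrightarrow> \<exists>e. t \<omega> e < r0 + \<epsilon>"
    and lim: "(\<lambda>n. Gpp (t \<omega>) (?k n) 0 / real n) \<longlonglongrightarrow> g 0"
    using eventually_happens'[OF ae_filter_bot] by blast
  have k: "(\<lambda>n. real (?k n) / real n) \<longlonglongrightarrow> 1"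
    by (rule path_len_tendsto[OF lattice_approx_tendsto]) simp
  have ge_weight: "g 0 \<le> t \<omega> e" for e
  proof (rule Gpp_origin_limit_le_weight[OF lim k])
    fix n
    have "?k n = 2 * nat \<lceil>real n / 2\<rceil>"
      by (simp add: path_len_eq bounces_def)
    moreover have "real n \<le> real (2 * nat \<lceil>real n / 2\<rceil>)"
      using real_nat_ceiling_ge[of "real n / 2"] by (simp only: of_nat_mult of_nat_numeral)
    ultimately show "n \<le> ?k n"
      by (simp only: of_nat_le_iff)
  qed (simp add: path_len_eq)
  show "g 0 \<le> r0"
  proof (rule field_le_epsilon)
    fix \<epsilon> :: real
    assume "0 < \<epsilon>"
    then obtain e where "t \<omega> e < r0 + \<epsilon>"
      using cheap by blast
    with ge_weight[of e] show "g 0 \<le> r0 + \<epsilon>"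
      by simp
  qed
  show "r0 \<le> g 0"
    using shape_ge_r0(1)[of 0] by simp
qed

lemma go_zero: "go 0 = min r0 0"
proof -
  let ?k = "path_len (lattice_approx (0 :: real^'d)) 1"
  obtain \<omega> where lim: "(\<lambda>n. Gpp_o (t \<omega>) (?k n) 0 / real n) \<longlonglongrightarrow> go 0"
    using eventually_happens'[OF ae_filter_bot shape_lim_lattice(2)[of 0 1, simplified]] by auto
  have "Gpp_o (t \<omega>) (?k n) 0 \<le> 0" for n
    using Gpp_o_le_Gpp[of 0 0 "?k n" "t \<omega>"] Gpp_le[of "[]" 0 0 "t \<omega>"] by (simp add: reach_0)
  then have "go 0 \<le> 0"
    by (intro tendsto_le[OF trivial_limit_sequentially tendsto_const lim] always_eventually allI)
       (simp add: divide_nonpos_nonneg)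
  then show ?thesis
    using go_le_g[of 0] g_zero shape_ge_r0(2)[of 0] by simp
qed

lemma AE_grid_lim:
  assumes a: "norm1 \<xi> < \<alpha>"
  shows "AE \<omega> in M. \<forall>N i. 0 < N \<longrightarrow> 0 < i \<longrightarrow>
    (\<lambda>n. Gpp (t \<omega>) (grid_len (lattice_approx \<xi>) \<alpha> N i n) (lattice_approx \<xi> n) / real n)
      \<longlonglongrightarrow> persp \<xi> (norm1 \<xi> + real i * (\<alpha> - norm1 \<xi>) / real N)"
proof -
  have grid_lim: "AE \<omega> in M. (\<lambda>n. Gpp (t \<omega>) (grid_len (lattice_approx \<xi>) \<alpha> N i n) (lattice_approx \<xi> n) / real n)
      \<longlonglongrightarrow> persp \<xi> (norm1 \<xi> + real i * (\<alpha> - norm1 \<xi>) / real N)"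
    if "0 < N" "0 < i" for N i
  proof -
    have "norm1 \<xi> < norm1 \<xi> + real i * (\<alpha> - norm1 \<xi>) / real N"
      using that a by simp
    moreover have "(\<lambda>n. real (grid_len (lattice_approx \<xi>) \<alpha> N i n) / real n)
        \<longlonglongrightarrow> norm1 \<xi> + real i * (\<alpha> - norm1 \<xi>) / real N"
      using a that by (intro grid_len_tendsto lattice_approx_tendsto) auto
    ultimately show ?thesis
      unfolding persp_def by (rule g_lim[OF _ _ _ lattice_approx_tendsto]) (simp add: reach_grid_len)
  qed
  show ?thesis
    unfolding AE_all_countable by (intro allI AE_impI grid_lim)
qed

lemma persp_grid_le_go_scaled:
  assumes a: "norm1 \<xi> < \<alpha>"
  shows "\<exists>C. \<forall>N>0. \<exists>i\<in>{1..N}.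
    persp \<xi> (norm1 \<xi> + real i * (\<alpha> - norm1 \<xi>) / real N) \<le> \<alpha> * go ((1 / \<alpha>) *\<^sub>R \<xi>) + C / real N"
proof -
  let ?x = "lattice_approx \<xi>" and ?a = "norm1 \<xi>" and ?V = "\<alpha> * go ((1 / \<alpha>) *\<^sub>R \<xi>)"
  have "AE \<omega> in M. (\<forall>N i. 0 < N \<longrightarrow> 0 < i \<longrightarrow> (\<lambda>n. Gpp (t \<omega>) (grid_len ?x \<alpha> N i n) (?x n) / real n)
        \<longlonglongrightarrow> persp \<xi> (?a + real i * (\<alpha> - ?a) / real N)) \<and>
      (\<lambda>n. Gpp_o (t \<omega>) (path_len ?x \<alpha> n) (?x n) / real n) \<longlonglongrightarrow> ?V"
    using AE_grid_lim[OF a] shape_lim_lattice(2)[OF a] by eventually_elim blast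
  then obtain \<omega> where
    grid: "\<And>N i. 0 < N \<Longrightarrow> 0 < i \<Longrightarrow> (\<lambda>n. Gpp (t \<omega>) (grid_len ?x \<alpha> N i n) (?x n) / real n)
      \<longlonglongrightarrow> persp \<xi> (?a + real i * (\<alpha> - ?a) / real N)"
    and lazy: "(\<lambda>n. Gpp_o (t \<omega>) (path_len ?x \<alpha> n) (?x n) / real n) \<longlonglongrightarrow> ?V"
    using eventually_happens'[OF ae_filter_bot] by blast
  have bounces: "(\<lambda>n. real (bounces ?x \<alpha> n) / real n) \<longlonglongrightarrow> (\<alpha> - ?a) / 2"
    by (rule bounces_tendsto[OF lattice_approx_tendsto]) (use a in simp)
  show ?thesis
  proof (intro exI[of _ "(\<alpha> - ?a) * \<bar>t \<omega> (0, i0)\<bar>"] allI impI)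
    fix N :: nat
    assume N: "0 < N"
    have "\<exists>i\<in>{1..N}. persp \<xi> (?a + real i * (\<alpha> - ?a) / real N)
        \<le> ?V + 2 * \<bar>t \<omega> (0, i0)\<bar> * ((\<alpha> - ?a) / 2) / real N"
      by (rule limit_grid_le[OF grid[OF N] lazy bounces N])
    moreover have "2 * \<bar>t \<omega> (0, i0)\<bar> * ((\<alpha> - ?a) / 2) / real N = (\<alpha> - ?a) * \<bar>t \<omega> (0, i0)\<bar> / real N"
      using N by (simp add: field_simps)
    ultimately show "\<exists>i\<in>{1..N}. persp \<xi> (?a + real i * (\<alpha> - ?a) / real N)
        \<le> ?V + (\<alpha> - ?a) * \<bar>t \<omega> (0, i0)\<bar> / real N"
      by (simp only:)
  qed
qed

lemma obtain_persp_le_go_scaled: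
  assumes a: "norm1 \<xi> < \<alpha>" and \<delta>: "0 < \<delta>"
  obtains \<tau> where "norm1 \<xi> < \<tau>" "\<tau> \<le> \<alpha>" "persp \<xi> \<tau> \<le> \<alpha> * go ((1 / \<alpha>) *\<^sub>R \<xi>) + \<delta>"
proof -
  let ?a = "norm1 \<xi>"
  obtain C where C: "\<And>N. 0 < N \<Longrightarrow> \<exists>i\<in>{1..N}.
      persp \<xi> (?a + real i * (\<alpha> - ?a) / real N) \<le> \<alpha> * go ((1 / \<alpha>) *\<^sub>R \<xi>) + C / real N"
    using persp_grid_le_go_scaled[OF a] by blast
  define N where "N = nat \<lceil>C / \<delta>\<rceil> + 1"
  have "C / \<delta> < real N"
    unfolding N_def by linarith
  then have CN: "C / real N < \<delta>"
    using \<delta> by (simp add: N_def divide_less_eq mult.commute)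
  obtain i where i: "1 \<le> i" "i \<le> N" "persp \<xi> (?a + real i * (\<alpha> - ?a) / real N) \<le> \<alpha> * go ((1 / \<alpha>) *\<^sub>R \<xi>) + C / real N"
    using C[of N] by (auto simp: N_def)
  have "real i * (\<alpha> - ?a) / real N \<le> real N * (\<alpha> - ?a) / real N"
    using i a by (intro divide_right_mono mult_right_mono) auto
  then show ?thesis
    using i a CN by (intro that[of "?a + real i * (\<alpha> - ?a) / real N"]) (auto simp: N_def)
qed

lemma g_le_go:
  assumes r0: "r0 \<le> 0" and \<zeta>: "\<zeta> \<in> ball1"
  shows "g \<zeta> \<le> go \<zeta>"
proof (rule field_le_epsilon)
  fix \<delta> :: real
  assume "0 < \<delta>"
  moreover have "norm1 \<zeta> < 1"
    using \<zeta> by simp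
  ultimately obtain \<tau> where \<tau>: "norm1 \<zeta> < \<tau>" "\<tau> \<le> 1" "persp \<zeta> \<tau> \<le> 1 * go ((1 / 1) *\<^sub>R \<zeta>) + \<delta>"
    using obtain_persp_le_go_scaled by blast
  have "0 < \<tau>"
    using \<tau>(1) norm1_nonneg[of \<zeta>] by linarith
  then have "g \<zeta> = g ((1 - (1 - \<tau>)) *\<^sub>R ((1 / \<tau>) *\<^sub>R \<zeta>) + (1 - \<tau>) *\<^sub>R 0)"
    by simp
  also have "\<dots> \<le> (1 - (1 - \<tau>)) * g ((1 / \<tau>) *\<^sub>R \<zeta>) + (1 - \<tau>) * g 0"
    using \<tau> \<open>0 < \<tau>\<close> scaleR_inverse_in_ball1[OF \<tau>(1)] by (intro convex_onD[OF convex_g]) auto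
  also have "\<dots> \<le> persp \<zeta> \<tau>"
    using g_zero r0 \<tau>(2) by (simp add: persp_def mult_nonneg_nonpos)
  finally show "g \<zeta> \<le> go \<zeta> + \<delta>"
    using \<tau>(3) by simp
qed

lemma ereal_persp:
  assumes "norm1 \<xi> < \<tau>"
  shows "ereal \<tau> * radial_ext g ((1 / \<tau>) *\<^sub>R \<xi>) = ereal (persp \<xi> \<tau>)"
proof -
  have "radial_ext g ((1 / \<tau>) *\<^sub>R \<xi>) = ereal (g ((1 / \<tau>) *\<^sub>R \<xi>))"
    by (rule radial_ext_ball1[OF scaleR_inverse_in_ball1[OF assms]])
  then show ?thesis
    by (simp add: persp_def)
qed

lemma continuous_on_persp:
  assumes "norm1 \<xi> < \<tau>\<^sub>0"
  shows "continuous_on {\<tau>\<^sub>0..\<alpha>} (persp \<xi>)"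
proof -
  have "continuous_on {\<tau>\<^sub>0..\<alpha>} (\<lambda>\<tau>. (1 / \<tau>) *\<^sub>R \<xi>)"
    using assms norm1_nonneg[of \<xi>] by (intro continuous_intros) auto
  moreover have "(\<lambda>\<tau>. (1 / \<tau>) *\<^sub>R \<xi>) ` {\<tau>\<^sub>0..\<alpha>} \<subseteq> ball1"
  proof (rule image_subsetI)
    fix \<tau>
    assume "\<tau> \<in> {\<tau>\<^sub>0..\<alpha>}"
    then show "(1 / \<tau>) *\<^sub>R \<xi> \<in> ball1"
      using assms by (intro scaleR_inverse_in_ball1) auto
  qed
  ultimately have "continuous_on {\<tau>\<^sub>0..\<alpha>} (\<lambda>\<tau>. g ((1 / \<tau>) *\<^sub>R \<xi>))"
    by (rule continuous_on_compose2[OF g.continuous_on])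
  then show ?thesis
    unfolding persp_def by (intro continuous_intros)
qed

lemma persp_tendsto_boundary:
  assumes "\<xi> \<noteq> 0"
  shows "((\<lambda>\<tau>. ereal (persp \<xi> \<tau>)) \<longlongrightarrow> ereal (norm1 \<xi>) * radial_ext g ((1 / norm1 \<xi>) *\<^sub>R \<xi>))
    (at_right (norm1 \<xi>))"
proof -
  let ?a = "norm1 \<xi>" and ?\<eta> = "(1 / norm1 \<xi>) *\<^sub>R \<xi>"
  have a: "0 < ?a"
    using norm1_pos[OF assms] .
  have \<eta>: "?\<eta> \<in> cball1"
    using a by (simp add: norm1_scaleR)
  have "((\<lambda>\<tau>. ?a / \<tau>) \<longlongrightarrow> ?a / ?a) (at_right ?a)"
    using a by (intro tendsto_divide tendsto_const tendsto_ident_at) auto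
  moreover have "\<forall>\<^sub>F \<tau> in at_right ?a. ?a / \<tau> < 1"
    using eventually_at_right_less[of ?a] by eventually_elim (use a in \<open>simp add: divide_less_eq\<close>)
  ultimately have "filterlim (\<lambda>\<tau>. ?a / \<tau>) (at_left 1) (at_right ?a)"
    using a by (intro tendsto_imp_filterlim_at_left) auto
  then have "((\<lambda>\<tau>. ereal (g ((?a / \<tau>) *\<^sub>R ?\<eta>))) \<longlongrightarrow> radial_ext g ?\<eta>) (at_right ?a)"
    by (rule filterlim_compose[OF g.radial_ext_tendsto[OF \<eta>]])
  then have "((\<lambda>\<tau>. ereal \<tau> * ereal (g ((?a / \<tau>) *\<^sub>R ?\<eta>))) \<longlongrightarrow> ereal ?a * radial_ext g ?\<eta>) (at_right ?a)"
    using a by (intro tendsto_mult_ereal[OF tendsto_ereal[OF tendsto_ident_at]]) auto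
  moreover have "\<forall>\<^sub>F \<tau> in at_right ?a. ereal \<tau> * ereal (g ((?a / \<tau>) *\<^sub>R ?\<eta>)) = ereal (persp \<xi> \<tau>)"
    using eventually_at_right_less[of ?a] by eventually_elim (use a in \<open>simp add: persp_def\<close>)
  ultimately show ?thesis
    by (rule Lim_transform_eventually)
qed

lemma go_scaled_le_boundary:
  assumes \<xi>: "\<xi> \<noteq> 0" and a: "norm1 \<xi> < \<alpha>"
  shows "ereal (\<alpha> * go ((1 / \<alpha>) *\<^sub>R \<xi>)) \<le> ereal (norm1 \<xi>) * radial_ext g ((1 / norm1 \<xi>) *\<^sub>R \<xi>)"
proof (rule tendsto_lowerbound[OF persp_tendsto_boundary[OF \<xi>]])
  show "\<forall>\<^sub>F \<tau> in at_right (norm1 \<xi>). ereal (\<alpha> * go ((1 / \<alpha>) *\<^sub>R \<xi>)) \<le> ereal (persp \<xi> \<tau>)"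
    using eventually_at_right_real[OF a]
    by eventually_elim (simp add: persp_def go_scaled_le_g_scaled)
qed simp

lemma INF_persp_eq:
  assumes \<xi>: "\<xi> \<noteq> 0" and a: "norm1 \<xi> < \<alpha>"
  shows "(INF \<tau>\<in>{norm1 \<xi>..\<alpha>}. ereal \<tau> * radial_ext g ((1 / \<tau>) *\<^sub>R \<xi>)) = ereal (\<alpha> * go ((1 / \<alpha>) *\<^sub>R \<xi>))"
    (is "?INF = ereal ?V")
proof (rule antisym)
  show "?INF \<le> ereal ?V"
  proof (rule ereal_le_epsilon2)
    fix e :: real
    assume "0 < e"
    with a obtain \<tau> where \<tau>: "norm1 \<xi> < \<tau>" "\<tau> \<le> \<alpha>" "persp \<xi> \<tau> \<le> ?V + e"
      by (rule obtain_persp_le_go_scaled)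
    then have "?INF \<le> ereal \<tau> * radial_ext g ((1 / \<tau>) *\<^sub>R \<xi>)"
      by (intro INF_lower) auto
    also have "\<dots> \<le> ereal ?V + ereal e"
      using \<tau> by (simp add: ereal_persp)
    finally show "?INF \<le> ereal ?V + ereal e" .
  qed
  show "ereal ?V \<le> ?INF"
  proof (rule INF_greatest)
    fix \<tau>
    assume "\<tau> \<in> {norm1 \<xi>..\<alpha>}"
    then show "ereal ?V \<le> ereal \<tau> * radial_ext g ((1 / \<tau>) *\<^sub>R \<xi>)"
      using go_scaled_le_boundary[OF \<xi> a] go_scaled_le_g_scaled[of \<xi> \<tau> \<alpha>]
      by (cases "\<tau> = norm1 \<xi>") (auto simp: ereal_persp persp_def)
  qed
qed

lemma persp_gt_near_boundary:
  assumes "\<xi> \<noteq> 0" "ereal c < ereal (norm1 \<xi>) * radial_ext g ((1 / norm1 \<xi>) *\<^sub>R \<xi>)"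
  obtains b where "norm1 \<xi> < b" "\<And>\<tau>. norm1 \<xi> < \<tau> \<Longrightarrow> \<tau> < b \<Longrightarrow> c < persp \<xi> \<tau>"
proof -
  have "\<forall>\<^sub>F \<tau> in at_right (norm1 \<xi>). ereal c < ereal (persp \<xi> \<tau>)"
    by (rule order_tendstoD(1)[OF persp_tendsto_boundary[OF assms(1)] assms(2)])
  then obtain b where b: "norm1 \<xi> < b" "\<And>\<tau>. norm1 \<xi> < \<tau> \<Longrightarrow> \<tau> < b \<Longrightarrow> ereal c < ereal (persp \<xi> \<tau>)"
    unfolding eventually_at_right_field by blast
  show ?thesis
    using b by (intro that[of b]) auto
qed

lemma obtain_persp_le_go_scaled_beyond:
  assumes a: "norm1 \<xi> < \<alpha>" and c: "\<alpha> * go ((1 / \<alpha>) *\<^sub>R \<xi>) < c"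
    and b: "\<And>\<tau>. norm1 \<xi> < \<tau> \<Longrightarrow> \<tau> < b \<Longrightarrow> c < persp \<xi> \<tau>" and e: "0 < e"
  obtains \<sigma> where "b \<le> \<sigma>" "\<sigma> \<le> \<alpha>" "persp \<xi> \<sigma> \<le> \<alpha> * go ((1 / \<alpha>) *\<^sub>R \<xi>) + e"
proof -
  let ?V = "\<alpha> * go ((1 / \<alpha>) *\<^sub>R \<xi>)"
  have "0 < min e (c - ?V)"
    using c e by simp
  with a obtain \<sigma> where \<sigma>: "norm1 \<xi> < \<sigma>" "\<sigma> \<le> \<alpha>" "persp \<xi> \<sigma> \<le> ?V + min e (c - ?V)"
    by (rule obtain_persp_le_go_scaled)
  have "b \<le> \<sigma>"
  proof (rule ccontr)
    assume "\<not> b \<le> \<sigma>"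
    then have "c < persp \<xi> \<sigma>"
      using b \<sigma>(1) by simp
    moreover have "min e (c - ?V) \<le> c - ?V"
      by simp
    ultimately show False
      using \<sigma>(3) by linarith
  qed
  moreover have "min e (c - ?V) \<le> e"
    by simp
  ultimately show ?thesis
    using \<sigma>(2,3) by (intro that[of \<sigma>]) auto
qed

lemma persp_attains_go_scaled:
  assumes \<xi>: "\<xi> \<noteq> 0" and a: "norm1 \<xi> < \<alpha>"
    and boundary: "ereal (\<alpha> * go ((1 / \<alpha>) *\<^sub>R \<xi>)) < ereal (norm1 \<xi>) * radial_ext g ((1 / norm1 \<xi>) *\<^sub>R \<xi>)"
  obtains \<tau> where "norm1 \<xi> < \<tau>" "\<tau> \<le> \<alpha>" "persp \<xi> \<tau> = \<alpha> * go ((1 / \<alpha>) *\<^sub>R \<xi>)"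
proof -
  let ?a = "norm1 \<xi>" and ?V = "\<alpha> * go ((1 / \<alpha>) *\<^sub>R \<xi>)"
  obtain c where c: "ereal ?V < ereal c" "ereal c < ereal ?a * radial_ext g ((1 / ?a) *\<^sub>R \<xi>)"
    using ereal_dense2[OF boundary] by blast
  obtain b where b: "?a < b" "\<And>\<tau>. ?a < \<tau> \<Longrightarrow> \<tau> < b \<Longrightarrow> c < persp \<xi> \<tau>"
    using persp_gt_near_boundary[OF \<xi> c(2)] by blast
  define \<tau>\<^sub>0 where "\<tau>\<^sub>0 = min b \<alpha>"
  have \<tau>\<^sub>0: "?a < \<tau>\<^sub>0" "\<tau>\<^sub>0 \<le> \<alpha>"
    using b(1) a by (auto simp: \<tau>\<^sub>0_def)
  then have "{\<tau>\<^sub>0..\<alpha>} \<noteq> {}"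
    by simp
  from continuous_attains_inf[OF compact_Icc this continuous_on_persp[OF \<tau>\<^sub>0(1)]]
  obtain \<tau> where \<tau>: "\<tau> \<in> {\<tau>\<^sub>0..\<alpha>}" "\<And>\<sigma>. \<sigma> \<in> {\<tau>\<^sub>0..\<alpha>} \<Longrightarrow> persp \<xi> \<tau> \<le> persp \<xi> \<sigma>"
    by blast
  have "persp \<xi> \<tau> \<le> ?V"
  proof (rule field_le_epsilon)
    fix e :: real
    assume "0 < e"
    have "?V < c"
      using c(1) by simp
    from obtain_persp_le_go_scaled_beyond[OF a this b(2) \<open>0 < e\<close>]
    obtain \<sigma> where \<sigma>: "b \<le> \<sigma>" "\<sigma> \<le> \<alpha>" "persp \<xi> \<sigma> \<le> ?V + e" .
    then have "persp \<xi> \<tau> \<le> persp \<xi> \<sigma>"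
      using \<tau>(2) by (simp add: \<tau>\<^sub>0_def)
    with \<sigma>(3) show "persp \<xi> \<tau> \<le> ?V + e"
      by linarith
  qed
  moreover have "?V \<le> persp \<xi> \<tau>"
    using \<tau>(1) \<tau>\<^sub>0 unfolding persp_def by (intro go_scaled_le_g_scaled) auto
  ultimately show ?thesis
    using \<tau>(1) \<tau>\<^sub>0 by (intro that[of \<tau>]) auto
qed

lemma persp_attains_INF:
  assumes \<xi>: "\<xi> \<noteq> 0" and a: "norm1 \<xi> < \<alpha>"
  shows "\<exists>\<tau>\<in>{norm1 \<xi>..\<alpha>}. ereal \<tau> * radial_ext g ((1 / \<tau>) *\<^sub>R \<xi>) = ereal (\<alpha> * go ((1 / \<alpha>) *\<^sub>R \<xi>))"
proof (cases "ereal (norm1 \<xi>) * radial_ext g ((1 / norm1 \<xi>) *\<^sub>R \<xi>) = ereal (\<alpha> * go ((1 / \<alpha>) *\<^sub>R \<xi>))")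
  case True
  then show ?thesis
    using a by (intro bexI[of _ "norm1 \<xi>"]) auto
next
  case False
  then have "ereal (\<alpha> * go ((1 / \<alpha>) *\<^sub>R \<xi>)) < ereal (norm1 \<xi>) * radial_ext g ((1 / norm1 \<xi>) *\<^sub>R \<xi>)"
    using go_scaled_le_boundary[OF \<xi> a] by simp
  with \<xi> a obtain \<tau> where "norm1 \<xi> < \<tau>" "\<tau> \<le> \<alpha>" "persp \<xi> \<tau> = \<alpha> * go ((1 / \<alpha>) *\<^sub>R \<xi>)"
    by (rule persp_attains_go_scaled)
  then show ?thesis
    by (intro bexI[of _ \<tau>]) (auto simp: ereal_persp)
qed

lemma go_scaled_ge_near_sphere:
  assumes \<eta>: "norm1 \<eta> = 1" and c: "ereal c < radial_ext g \<eta>"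
  obtains b where "1 < b" "\<And>\<alpha>. 1 < \<alpha> \<Longrightarrow> \<alpha> < b \<Longrightarrow> c \<le> \<alpha> * go ((1 / \<alpha>) *\<^sub>R \<eta>)"
proof -
  have "\<eta> \<noteq> 0"
    using \<eta> by auto
  have "ereal c < ereal (norm1 \<eta>) * radial_ext g ((1 / norm1 \<eta>) *\<^sub>R \<eta>)"
    using c \<eta> by simp
  then obtain b where b: "norm1 \<eta> < b" "\<And>\<tau>. norm1 \<eta> < \<tau> \<Longrightarrow> \<tau> < b \<Longrightarrow> c < persp \<eta> \<tau>"
    using persp_gt_near_boundary[OF \<open>\<eta> \<noteq> 0\<close>] by blast
  have "c \<le> \<alpha> * go ((1 / \<alpha>) *\<^sub>R \<eta>)" if \<alpha>: "1 < \<alpha>" "\<alpha> < b" for \<alpha>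
  proof -
    have "ereal c \<le> (INF \<tau>\<in>{norm1 \<eta>..\<alpha>}. ereal \<tau> * radial_ext g ((1 / \<tau>) *\<^sub>R \<eta>))"
    proof (rule INF_greatest)
      fix \<tau>
      assume \<tau>: "\<tau> \<in> {norm1 \<eta>..\<alpha>}"
      show "ereal c \<le> ereal \<tau> * radial_ext g ((1 / \<tau>) *\<^sub>R \<eta>)"
      proof (cases "\<tau> = 1")
        case True
        then show ?thesis
          using c by simp
      next
        case False
        then have "norm1 \<eta> < \<tau>" "\<tau> < b"
          using \<tau> \<alpha> \<eta> by auto
        then have "c < persp \<eta> \<tau>"
          by (rule b(2))
        then show ?thesis
          using ereal_persp[OF \<open>norm1 \<eta> < \<tau>\<close>] by simp
      qed
    qed
    also have "\<dots> = ereal (\<alpha> * go ((1 / \<alpha>) *\<^sub>R \<eta>))"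
      using INF_persp_eq[OF \<open>\<eta> \<noteq> 0\<close>] \<eta> \<alpha>(1) by simp
    finally show ?thesis
      by simp
  qed
  then show ?thesis
    using b(1) \<eta> by (intro that[of b]) auto
qed

lemma go_ge_near_sphere:
  assumes \<eta>: "norm1 \<eta> = 1" and c: "ereal c < radial_ext g \<eta>"
  shows "\<forall>\<^sub>F s in at_left 1. s * c \<le> go (s *\<^sub>R \<eta>)"
proof -
  obtain b where b: "1 < b" "\<And>\<alpha>. 1 < \<alpha> \<Longrightarrow> \<alpha> < b \<Longrightarrow> c \<le> \<alpha> * go ((1 / \<alpha>) *\<^sub>R \<eta>)"
    using go_scaled_ge_near_sphere[OF \<eta> c] by blast
  have "\<forall>\<^sub>F s in at_left 1. s \<in> {1 / b<..<1}"
    using b(1) by (intro eventually_at_left_real) auto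
  then show ?thesis
  proof eventually_elim
    case (elim s)
    have "0 < 1 / b"
      using b(1) by simp
    moreover have "1 / b < s" "s < 1"
      using elim by auto
    ultimately have s: "0 < s" "s < 1"
      by linarith+
    have "1 < s * b"
      using elim b(1) by (simp add: divide_less_eq)
    with s have "1 < 1 / s" "1 / s < b"
      by (simp_all add: divide_less_eq mult.commute)
    then have "c \<le> 1 / s * go ((1 / (1 / s)) *\<^sub>R \<eta>)"
      by (rule b(2))
    then show "s * c \<le> go (s *\<^sub>R \<eta>)"
      using s by (simp add: field_simps)
  qed
qed

lemma radial_go_eq_g_sphere:
  assumes \<eta>: "norm1 \<eta> = 1"
  shows "radial_ext go \<eta> = radial_ext g \<eta>"
proof (rule antisym)
  have \<eta>U: "\<eta> \<in> cball1"
    using \<eta> by simp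
  have "\<forall>\<^sub>F s in at_left 1. ereal (go (s *\<^sub>R \<eta>)) \<le> ereal (g (s *\<^sub>R \<eta>))"
    using \<eta> by (intro eventually_at_left_1) (simp add: go_le_g norm1_scaleR)
  then show "radial_ext go \<eta> \<le> radial_ext g \<eta>"
    by (rule tendsto_le[OF trivial_limit_at_left_real g.radial_ext_tendsto[OF \<eta>U] go.radial_ext_tendsto[OF \<eta>U]])
  show "radial_ext g \<eta> \<le> radial_ext go \<eta>"
  proof (rule ccontr)
    assume "\<not> radial_ext g \<eta> \<le> radial_ext go \<eta>"
    then have "radial_ext go \<eta> < radial_ext g \<eta>"
      by simp
    then obtain c where c: "radial_ext go \<eta> < ereal c" "ereal c < radial_ext g \<eta>"
      using ereal_dense2 by blast
    have "((\<lambda>s. ereal (s * c)) \<longlongrightarrow> ereal (1 * c)) (at_left 1)"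
      by (intro tendsto_ereal tendsto_mult tendsto_ident_at tendsto_const)
    moreover have "\<forall>\<^sub>F s in at_left 1. ereal (s * c) \<le> ereal (go (s *\<^sub>R \<eta>))"
      using go_ge_near_sphere[OF \<eta> c(2)] by eventually_elim simp
    ultimately have "ereal (1 * c) \<le> radial_ext go \<eta>"
      by (rule tendsto_le[OF trivial_limit_at_left_real go.radial_ext_tendsto[OF \<eta>U]])
    with c(1) show False
      by simp
  qed
qed

lemma variational_formula:
  assumes "\<xi> \<noteq> 0" "norm1 \<xi> \<le> \<alpha>"
  shows "ereal \<alpha> * radial_ext go ((1 / \<alpha>) *\<^sub>R \<xi>) = (INF \<tau>\<in>{norm1 \<xi>..\<alpha>}. ereal \<tau> * radial_ext g ((1 / \<tau>) *\<^sub>R \<xi>))"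
    and "\<exists>\<tau>\<in>{norm1 \<xi>..\<alpha>}. ereal \<alpha> * radial_ext go ((1 / \<alpha>) *\<^sub>R \<xi>) = ereal \<tau> * radial_ext g ((1 / \<tau>) *\<^sub>R \<xi>)"
proof -
  have "ereal \<alpha> * radial_ext go ((1 / \<alpha>) *\<^sub>R \<xi>) = (INF \<tau>\<in>{norm1 \<xi>..\<alpha>}. ereal \<tau> * radial_ext g ((1 / \<tau>) *\<^sub>R \<xi>)) \<and>
    (\<exists>\<tau>\<in>{norm1 \<xi>..\<alpha>}. ereal \<alpha> * radial_ext go ((1 / \<alpha>) *\<^sub>R \<xi>) = ereal \<tau> * radial_ext g ((1 / \<tau>) *\<^sub>R \<xi>))"
  proof (cases "norm1 \<xi> < \<alpha>")
    case True
    have lhs: "ereal \<alpha> * radial_ext go ((1 / \<alpha>) *\<^sub>R \<xi>) = ereal (\<alpha> * go ((1 / \<alpha>) *\<^sub>R \<xi>))"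
      using radial_ext_ball1[OF scaleR_inverse_in_ball1[OF True]] by simp
    obtain \<tau> where "\<tau> \<in> {norm1 \<xi>..\<alpha>}"
      "ereal \<tau> * radial_ext g ((1 / \<tau>) *\<^sub>R \<xi>) = ereal (\<alpha> * go ((1 / \<alpha>) *\<^sub>R \<xi>))"
      using persp_attains_INF[OF assms(1) True] by blast
    then show ?thesis
      using lhs INF_persp_eq[OF assms(1) True] by (intro conjI bexI[of _ \<tau>]) auto
  next
    case False
    then have "\<alpha> = norm1 \<xi>"
      using assms(2) by simp
    moreover have "norm1 ((1 / norm1 \<xi>) *\<^sub>R \<xi>) = 1"
      using norm1_pos[OF assms(1)] by (simp add: norm1_scaleR)
    ultimately show ?thesis
      using radial_go_eq_g_sphere by auto
  qed
  then show "ereal \<alpha> * radial_ext go ((1 / \<alpha>) *\<^sub>R \<xi>) = (INF \<tau>\<in>{norm1 \<xi>..\<alpha>}. ereal \<tau> * radial_ext g ((1 / \<tau>) *\<^sub>R \<xi>))"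
    and "\<exists>\<tau>\<in>{norm1 \<xi>..\<alpha>}. ereal \<alpha> * radial_ext go ((1 / \<alpha>) *\<^sub>R \<xi>) = ereal \<tau> * radial_ext g ((1 / \<tau>) *\<^sub>R \<xi>)"
    by blast+
qed

lemma go_less_g_near_0:
  assumes "0 < r0"
  shows "\<exists>\<epsilon>>0. \<epsilon> \<le> 1 \<and> (\<forall>\<xi>. norm1 \<xi> < \<epsilon> \<longrightarrow> go \<xi> < g \<xi>)"
proof -
  have "isCont (\<lambda>\<xi>. g \<xi> - go \<xi>) 0"
    using g.isCont go.isCont by (intro continuous_intros) auto
  then have "\<exists>d>0. \<forall>\<xi>. dist \<xi> 0 < d \<longrightarrow> dist (g \<xi> - go \<xi>) (g 0 - go 0) < r0"
    using assms unfolding continuous_at_eps_delta by blast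
  moreover have "g 0 - go 0 = r0"
    using g_zero go_zero assms by simp
  ultimately obtain d where d: "0 < d" "\<And>\<xi>. dist \<xi> 0 < d \<Longrightarrow> dist (g \<xi> - go \<xi>) r0 < r0"
    by auto
  show ?thesis
  proof (intro exI[of _ "min d 1"] conjI allI impI)
    fix \<xi> :: "real^'d"
    assume "norm1 \<xi> < min d 1"
    then have "dist \<xi> 0 < d"
      using norm_le_norm1[of \<xi>] by simp
    then show "go \<xi> < g \<xi>"
      using d(2) by (simp add: dist_real_def abs_less_iff)
  qed (use d in auto)
qed

lemma radial_g_eq_go:
  assumes "r0 \<le> 0" "\<xi> \<in> cball1"
  shows "radial_ext g \<xi> = radial_ext go \<xi>"
proof (rule radial_ext_cong[OF _ assms(2)])
  fix \<zeta> :: "real^'d"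
  assume "\<zeta> \<in> ball1"
  then show "g \<zeta> = go \<zeta>"
    using g_le_go[OF assms(1)] go_le_g by (intro antisym)
qed

lemma radial_g_zero: "radial_ext g 0 = ereal r0"
  by (simp add: radial_ext_ball1 g_zero)

lemma radial_go_zero: "radial_ext go 0 = min (ereal r0) 0"
  by (simp add: radial_ext_ball1 go_zero min_def)

end

theorem lemma4p1:
  fixes M :: "'w measure"
    and t :: "'w \<Rightarrow> 'd::finite edge \<Rightarrow> real"
    and g go :: "real^'d \<Rightarrow> real"
    and i0 :: 'd
  assumes dim: "CARD('d) \<ge> 2"
    and P: "prob_space M"
    and meas: "\<And>e. (\<lambda>\<omega>. t \<omega> e) \<in> borel_measurable M"
    and indep: "prob_space.indep_vars M (\<lambda>_. borel) (\<lambda>e \<omega>. t \<omega> e) UNIV"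
    and ident: "\<And>e e'. distr M borel (\<lambda>\<omega>. t \<omega> e) = distr M borel (\<lambda>\<omega>. t \<omega> e')"
    and r0_fin: "ess_inf M (\<lambda>\<omega>. t \<omega> (0, i0)) > - \<infinity>"
    and moment: "(\<integral>\<^sup>+ \<omega>. ennreal ((Min ((\<lambda>e. max (t \<omega> e) 0) ` origin_edges)) ^ CARD('d)) \<partial>M) < \<infinity>"
    and g_cont: "continuous_on {\<xi>. norm1 \<xi> < 1} g"
    and g_conv: "convex_on {\<xi>. norm1 \<xi> < 1} g"
    and go_cont: "continuous_on {\<xi>. norm1 \<xi> < 1} go"
    and go_conv: "convex_on {\<xi>. norm1 \<xi> < 1} go"
    and g_lim: "\<And>\<xi> \<alpha> k x. \<alpha> > norm1 \<xi> \<Longrightarrow> (\<lambda>n. real (k n) / real n) \<longlonglongrightarrow> \<alpha> \<Longrightarrow>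
                  (\<forall>n. x n \<in> reach (k n)) \<Longrightarrow> (\<lambda>n. (1 / real n) *\<^sub>R of_intvec (x n)) \<longlonglongrightarrow> \<xi> \<Longrightarrow>
                  AE \<omega> in M. (\<lambda>n. Gpp (t \<omega>) (k n) (x n) / real n) \<longlonglongrightarrow> \<alpha> * g ((1 / \<alpha>) *\<^sub>R \<xi>)"
    and go_lim: "\<And>\<xi> \<alpha> k y. \<alpha> > norm1 \<xi> \<Longrightarrow> (\<lambda>n. real (k n) / real n) \<longlonglongrightarrow> \<alpha> \<Longrightarrow>
                  (\<forall>n. y n \<in> reach_o (k n)) \<Longrightarrow> (\<lambda>n. (1 / real n) *\<^sub>R of_intvec (y n)) \<longlonglongrightarrow> \<xi> \<Longrightarrow>
                  AE \<omega> in M. (\<lambda>n. Gpp_o (t \<omega>) (k n) (y n) / real n) \<longlonglongrightarrow> \<alpha> * go ((1 / \<alpha>) *\<^sub>R \<xi>)"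
  shows
    "let r0 = ess_inf M (\<lambda>\<omega>. t \<omega> (0, i0)); U = {\<xi>::real^'d. norm1 \<xi> \<le> 1};
         G = radial_ext g; Go = radial_ext go in
     \<comment> \<open>the radial limits defining the extension exist\<close>
     (\<forall>\<xi>. norm1 \<xi> = 1 \<longrightarrow>
        (\<exists>L. ((\<lambda>s. ereal (g (s *\<^sub>R \<xi>))) \<longlongrightarrow> L) (at_left 1) \<and> L > - \<infinity>) \<and>
        (\<exists>L. ((\<lambda>s. ereal (go (s *\<^sub>R \<xi>))) \<longlongrightarrow> L) (at_left 1) \<and> L > - \<infinity>)) \<and>
     \<comment> \<open>(i)\<close>
     G 0 = r0 \<and> Go 0 = min r0 0 \<and>
     \<comment> \<open>(ii)\<close>
     (r0 \<le> 0 \<longrightarrow> (\<forall>\<xi>\<in>U. G \<xi> = Go \<xi>)) \<and>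
     (r0 > 0 \<longrightarrow> (\<exists>\<epsilon>>0. \<epsilon> \<le> 1 \<and> (\<forall>\<xi>. norm1 \<xi> < \<epsilon> \<longrightarrow> go \<xi> < g \<xi>))) \<and>
     \<comment> \<open>(iii)\<close>
     (\<forall>\<xi> \<alpha>. \<xi> \<noteq> 0 \<and> \<alpha> \<ge> norm1 \<xi> \<longrightarrow>
        ereal \<alpha> * Go ((1 / \<alpha>) *\<^sub>R \<xi>) =
          (INF \<tau>\<in>{norm1 \<xi>..\<alpha>}. ereal \<tau> * G ((1 / \<tau>) *\<^sub>R \<xi>)) \<and>
        (\<exists>\<tau>\<in>{norm1 \<xi>..\<alpha>}. ereal \<alpha> * Go ((1 / \<alpha>) *\<^sub>R \<xi>) = ereal \<tau> * G ((1 / \<tau>) *\<^sub>R \<xi>))) \<and>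
     (\<forall>\<xi>. norm1 \<xi> = 1 \<longrightarrow> Go \<xi> = G \<xi>) \<and>
     \<comment> \<open>(iv)\<close>
     convex_ereal_on U G \<and> lsc_ereal_on U G \<and> convex_ereal_on U Go \<and> lsc_ereal_on U Go"
proof -
  \<comment> \<open>dim and moment only serve the existence of g and go, which is assumed here; continuity of
    g and go follows from their convexity.\<close>
  interpret shape_functions M t i0 g go
    using P meas indep ident r0_fin g_lim go_lim g_conv go_conv
    by (intro shape_functions.intro iid_weights.intro iid_weights_axioms.intro shape_functions_axioms.intro) auto
  have sphere: "norm1 \<xi> = 1 \<Longrightarrow> \<xi> \<in> cball1" for \<xi> :: "real^'d"
    by simp
  show ?thesis
    unfolding Let_def ess_inf_weight_eq
    using g.radial_limit_exists[OF sphere] go.radial_limit_exists[OF sphere] radial_g_zero radial_go_zero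
      radial_g_eq_go go_less_g_near_0 variational_formula radial_go_eq_g_sphere
      g.convex_radial_ext g.lsc_radial_ext go.convex_radial_ext go.lsc_radial_ext
    by auto
qed

end
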